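(* Let $C\subset\mathbb{D}$ be a subspace of dimension $n\ge1$ with basis $c_1,\dots,c_n$, and let $q_C$ be the polynomial defined in the context. Then there exist a differential operator $\bar Q$ in $x$ with polynomial-exponential coefficients and a polynomial-exponential function $\pi(x)$ such that $q_C(\partial)=\bar Q\circ\frac{1}{\pi(x)}\circ\bar K_C$, where $\bar K_C=\tau_C(x)K_C$. For such $\bar Q$ and $\pi$, the translational-differential operator in $z$ $$\hat\Lambda:=z^{-n}\circ b(\bar K_C)\circ b(\bar Q)\circ \frac{z^n}{q_C(z)}$$ satisfies $$\hat\Lambda[\psi_C(x,z)]=\pi(x)\,\psi_C(x,z).$$
   Context: $\mathbb{D}$ is the complex vector space spanned by the distributions $\Delta(\lambda,m)$ ($\lambda\in\mathbb{C}$, $m\in\mathbb{N}$) acting on functions of $z$ by $\Delta(\lambda,m)[f(z)]=f^{(m)}(\lambda)$; for a function $f(x,z)$, $c[f(x,z)]$ denotes the resulting function of $x$. Write $\partial=\partial/\partial x$, $\partial_z=\partial/\partial z$, and for $\lambda\in\mathbb{C}$ let $\mathbf{S}_\lambda$ be the translation operator $\mathbf{S}_\lambda f(z)=f(z+\lambda)$. A polynomial-exponential function is one of the form $\sum_{i=1}^k p_i(x)e^{\mu_i x}$ with $\mu_i\in\mathbb{C}$, $p_i\in\mathbb{C}[x]$. $\tau_C(x)=\mathrm{Wr}(c_1(e^{xz}),\dots,c_n(e^{xz}))$ (Wronskian in $x$), $K_C$ is the unique monic differential operator in $x$ of order $n$ whose kernel contains all $c_i(e^{xz})$, i.e. $K_C(f)=\frac{1}{\tau_C(x)}\mathrm{Wr}(c_1(e^{xz}),\dots,c_n(e^{xz}),f(x))$,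 and the wave function is $\psi_C(x,z)=z^{-n}K_C e^{xz}$. If $\lambda_1,\dots,\lambda_N$ are the points in the supports of the distributions in $C$ and $m_i$ is the highest order of derivative taken at $\lambda_i$ by any element of $C$, then $q_C(z)=\prod_{i=1}^N (z-\lambda_i)^{m_i+1}$. For a differential operator $L$ in $x$ with polynomial-exponential coefficients, $b(L)$ is the unique translational-differential operator in $z$ with polynomial coefficients with $L[e^{xz}]=b(L)[e^{xz}]$; explicitly $b$ is linear with $b(x^k e^{\mu x}\partial^j)=z^j\circ\partial_z^k\circ\mathbf{S}_\mu$ (and $b$ is an anti-isomorphism onto its image). Operators in $z$ act on functions of $(x,z)$ with $x$ treated as a parameter. *)

theory Defs
  imports "HOL-Complex_Analysis.Complex_Analysis" "HOL-Computational_Algebra.Polynomial"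
begin

(* An element of the space D: a finitely supported coefficient function,
   c = sum over (lambda,m) of c(lambda,m) * Delta(lambda,m). *)
type_synonym distr = "complex \<times> nat \<Rightarrow> complex"

definition finite_supp :: "('a \<Rightarrow> complex) \<Rightarrow> bool" where
  "finite_supp f \<longleftrightarrow> finite {t. f t \<noteq> 0}"

definition dapp :: "distr \<Rightarrow> (complex \<Rightarrow> complex) \<Rightarrow> complex" where
  "dapp c f = (\<Sum>p\<in>{p. c p \<noteq> 0}. c p * (deriv ^^ snd p) f (fst p))"

definition dspan :: "nat \<Rightarrow> (nat \<Rightarrow> distr) \<Rightarrow> distr set" where
  "dspan n cs = {(\<lambda>p. \<Sum>i<n. a i * cs i p) | a. True}"

definition dlin_indep :: "nat \<Rightarrow> (nat \<Rightarrow> distr) \<Rightarrow> bool" where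
  "dlin_indep n cs \<longleftrightarrow>
     (\<forall>a. (\<forall>p. (\<Sum>i<n. a i * cs i p) = 0) \<longrightarrow> (\<forall>i<n. a i = 0))"

definition supp_points :: "distr set \<Rightarrow> complex set" where
  "supp_points C = {l. \<exists>c\<in>C. \<exists>m. c (l, m) \<noteq> 0}"

definition max_order :: "distr set \<Rightarrow> complex \<Rightarrow> nat" where
  "max_order C l = Max {m. \<exists>c\<in>C. c (l, m) \<noteq> 0}"

definition qC :: "distr set \<Rightarrow> complex poly" where
  "qC C = (\<Prod>l\<in>supp_points C. [:-l, 1:] ^ (max_order C l + 1))"

definition poly_diff :: "complex poly \<Rightarrow> (complex \<Rightarrow> complex) \<Rightarrow> complex \<Rightarrow> complex" where
  "poly_diff q f x = (\<Sum>i\<le>degree q. coeff q i * (deriv ^^ i) f x)"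

definition wronsk :: "nat \<Rightarrow> (nat \<Rightarrow> complex \<Rightarrow> complex) \<Rightarrow> complex \<Rightarrow> complex" where
  "wronsk n fs x =
     (\<Sum>p | p permutes {..<n}. of_int (sign p) * (\<Prod>i<n. (deriv ^^ i) (fs (p i)) x))"

definition cexp :: "(nat \<Rightarrow> distr) \<Rightarrow> nat \<Rightarrow> complex \<Rightarrow> complex" where
  "cexp cs j = (\<lambda>x. dapp (cs j) (\<lambda>z. exp (x * z)))"

definition tauC :: "nat \<Rightarrow> (nat \<Rightarrow> distr) \<Rightarrow> complex \<Rightarrow> complex" where
  "tauC n cs = wronsk n (cexp cs)"

(* Kbar_C = tau_C K_C, i.e. f \<mapsto> Wr(c_1(e^{xz}),...,c_n(e^{xz}),f) *)
definition KbarC :: "nat \<Rightarrow> (nat \<Rightarrow> distr) \<Rightarrow> (complex \<Rightarrow> complex) \<Rightarrow> complex \<Rightarrow> complex" where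
  "KbarC n cs f = wronsk (Suc n) (\<lambda>j. if j < n then cexp cs j else f)"

definition KC :: "nat \<Rightarrow> (nat \<Rightarrow> distr) \<Rightarrow> (complex \<Rightarrow> complex) \<Rightarrow> complex \<Rightarrow> complex" where
  "KC n cs f x = KbarC n cs f x / tauC n cs x"

definition psiC :: "nat \<Rightarrow> (nat \<Rightarrow> distr) \<Rightarrow> complex \<Rightarrow> complex \<Rightarrow> complex" where
  "psiC n cs x z = KC n cs (\<lambda>y. exp (y * z)) x / z ^ n"

(* polynomial-exponential function: p(k,mu) is the coefficient of x^k e^{mu x} *)
definition pe_fun :: "(nat \<times> complex \<Rightarrow> complex) \<Rightarrow> complex \<Rightarrow> complex" where
  "pe_fun p x = (\<Sum>t\<in>{t. p t \<noteq> 0}. p t * x ^ fst t * exp (snd t * x))"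

(* differential operator in x with polynomial-exponential coefficients:
   L(k,mu,j) is the coefficient of x^k e^{mu x} \<partial>^j *)
type_synonym peop = "nat \<times> complex \<times> nat \<Rightarrow> complex"

definition peop_apply :: "peop \<Rightarrow> (complex \<Rightarrow> complex) \<Rightarrow> complex \<Rightarrow> complex" where
  "peop_apply L f x =
     (\<Sum>t\<in>{t. L t \<noteq> 0}. (case t of (k, mu, j) \<Rightarrow>
        L t * x ^ k * exp (mu * x) * (deriv ^^ j) f x))"

(* b(L): b(x^k e^{mu x} \<partial>^j) = z^j \<circ> \<partial>_z^k \<circ> S_mu, acting on functions of z *)
definition b_apply :: "peop \<Rightarrow> (complex \<Rightarrow> complex) \<Rightarrow> complex \<Rightarrow> complex" where
  "b_apply L F z =
     (\<Sum>t\<in>{t. L t \<noteq> 0}. (case t of (k, mu, j) \<Rightarrow>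
        L t * z ^ j * (deriv ^^ k) (\<lambda>w. F (w + mu)) z))"

definition represents_Kbar :: "nat \<Rightarrow> (nat \<Rightarrow> distr) \<Rightarrow> peop \<Rightarrow> bool" where
  "represents_Kbar n cs Kb \<longleftrightarrow> finite_supp Kb \<and>
     (\<forall>f. f holomorphic_on UNIV \<longrightarrow> (\<forall>x. peop_apply Kb f x = KbarC n cs f x))"

(* q_C(\<partial>) = Q \<circ> (1/pp) \<circ> Kbar_C, as an identity of operators (with meromorphic
   coefficients), tested on all entire functions at all points where pp \<noteq> 0 *)
definition factorization :: "nat \<Rightarrow> (nat \<Rightarrow> distr) \<Rightarrow> peop \<Rightarrow> (nat \<times> complex \<Rightarrow> complex) \<Rightarrow> bool" where
  "factorization n cs Q pp \<longleftrightarrow> finite_supp Q \<and> finite_supp pp \<and> pe_fun pp \<noteq> (\<lambda>x. 0) \<and>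
     (\<forall>f. f holomorphic_on UNIV \<longrightarrow> (\<forall>x. pe_fun pp x \<noteq> 0 \<longrightarrow>
        poly_diff (qC (dspan n cs)) f x =
        peop_apply Q (\<lambda>y. KbarC n cs f y / pe_fun pp y) x))"

definition Lambda_hat :: "nat \<Rightarrow> (nat \<Rightarrow> distr) \<Rightarrow> peop \<Rightarrow> peop \<Rightarrow> (complex \<Rightarrow> complex) \<Rightarrow> complex \<Rightarrow> complex" where
  "Lambda_hat n cs Kb Q F z =
     (1 / z ^ n) * b_apply Kb (b_apply Q (\<lambda>u. u ^ n / poly (qC (dspan n cs)) u * F u)) z"

end

(* The Wronskian tau_C is the leading coefficient of Kbar_C and is not identically zero, the
   c_i(e^(xz)) being linearly independent. Pseudo-dividing q_C(d/dx) by Kbar_C gives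
   tau^s q_C(d/dx) = A o Kbar_C + R with ord R < n; both q_C(d/dx) and Kbar_C annihilate the n
   functions c_i(e^(xz)), hence so does R, which therefore vanishes wherever tau does not.
   Moving the powers of tau through A by Leibniz' rule yields q_C(d/dx) = Q o (1/pi) o Kbar_C
   with pi = tau^M.

   Since psi_C = z^(-n) Kbar_C[e^(xz)] / tau, the identity for Lambda reduces to
   b(Q)[Kbar_C[e^(xw)] / q_C(w)] = pi(x) e^(xz). Applying the factorization to the function
   x |-> b(Q)[e^(xw) / q_C(w)](z), which q_C(d/dx) maps to Q[e^(xz)] and Kbar_C maps to the
   left-hand side, shows that Q annihilates (left-hand side)/pi - e^(xz) for almost all z. This
   function is e^(xz) times a rational function of z with polynomial-exponential coefficients in
   x, and comparing top coefficients in z shows that it vanishes. *)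

theory Submission
  imports Defs "Jordan_Normal_Form.Determinant"
begin

section \<open>Higher derivatives\<close>

lemma higher_deriv_shift:
  "(deriv ^^ n) (\<lambda>w. f (w + a)) (z::complex) = (deriv ^^ n) f (z + a)"
proof -
  have "(deriv ^^ n) (\<lambda>w. f (w + a)) z = (deriv ^^ n) ((\<lambda>w. f (w + a)) \<circ> (\<lambda>x. z + x)) 0"
    by (rule higher_deriv_shift_0)
  also have "\<dots> = (deriv ^^ n) (f \<circ> (\<lambda>x. (z + a) + x)) 0"
    by (simp add: o_def add_ac)
  also have "\<dots> = (deriv ^^ n) f (z + a)"
    by (rule higher_deriv_shift_0[symmetric])
  finally show ?thesis .
qed

lemma higher_deriv_higher_deriv: "(deriv ^^ a) ((deriv ^^ b) g) = (deriv ^^ (a + b)) g"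
  by (simp add: funpow_add)

lemma higher_deriv_sum:
  assumes "finite I" "\<And>i. i \<in> I \<Longrightarrow> f i holomorphic_on S" "open S" "z \<in> S"
  shows "(deriv ^^ n) (\<lambda>w. \<Sum>i\<in>I. f i w) z = (\<Sum>i\<in>I. (deriv ^^ n) (f i) z)"
  using assms(1,2)
proof (induction I rule: finite_induct)
  case (insert i I)
  have "(\<lambda>w. \<Sum>i\<in>I. f i w) holomorphic_on S"
    using insert by (intro holomorphic_on_sum) auto
  then show ?case
    using insert higher_deriv_add[of "f i" S "\<lambda>w. \<Sum>i\<in>I. f i w", OF _ _ assms(3,4)] by simp
qed simp

lemma higher_deriv_sum_cmult:
  assumes "finite I" "\<And>i. i \<in> I \<Longrightarrow> f i holomorphic_on S" "open S" "z \<in> S"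
  shows "(deriv ^^ n) (\<lambda>w. \<Sum>i\<in>I. c i * f i w) z = (\<Sum>i\<in>I. c i * (deriv ^^ n) (f i) z)"
proof -
  have "(deriv ^^ n) (\<lambda>w. \<Sum>i\<in>I. c i * f i w) z = (\<Sum>i\<in>I. (deriv ^^ n) (\<lambda>w. c i * f i w) z)"
    by (rule higher_deriv_sum[OF assms(1) _ assms(3,4)]) (auto intro!: holomorphic_intros assms(2))
  also have "\<dots> = (\<Sum>i\<in>I. c i * (deriv ^^ n) (f i) z)"
    by (intro sum.cong refl higher_deriv_cmult[OF assms(2) assms(4,3)])
  finally show ?thesis .
qed

lemma higher_deriv_exp_linear:
  "(deriv ^^ n) (\<lambda>w. exp (c * w)) (z::complex) = c ^ n * exp (c * z)"
proof (induction n arbitrary: z)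
  case (Suc n)
  have "deriv (\<lambda>w. exp (c * w)) = (\<lambda>w. c * exp (c * w))"
    by (intro ext DERIV_imp_deriv) (auto intro!: derivative_eq_intros)
  then have "(deriv ^^ Suc n) (\<lambda>w. exp (c * w)) z = (deriv ^^ n) (\<lambda>w. c * exp (c * w)) z"
    by (simp add: funpow_Suc_right del: funpow.simps)
  also have "\<dots> = c * (deriv ^^ n) (\<lambda>w. exp (c * w)) z"
    by (rule higher_deriv_cmult[where A = UNIV]) (auto intro: holomorphic_intros)
  finally show ?case using Suc by simp
qed simp

lemma higher_deriv_exp_linear':
  "(deriv ^^ n) (\<lambda>w. exp (w * c)) (z::complex) = c ^ n * exp (z * c)"
  using higher_deriv_exp_linear[of n c z] by (simp add: mult.commute)

text \<open>The Leibniz expansion of \<open>(d/dw)^k (e^(x w) \<rho>(w))\<close> at \<open>w = z\<close>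
  (lemma \<open>higher_deriv_exp_mult\<close>), written out so that it is visibly entire in \<open>x\<close>.\<close>

definition exp_leibniz :: "nat \<Rightarrow> (complex \<Rightarrow> complex) \<Rightarrow> complex \<Rightarrow> complex \<Rightarrow> complex" where
  "exp_leibniz k \<rho> x z =
     (\<Sum>i = 0..k. of_nat (k choose i) * x ^ i * exp (x * z) * (deriv ^^ (k - i)) \<rho> z)"

lemma higher_deriv_exp_mult:
  assumes "\<rho> holomorphic_on S" "open S" "z \<in> S"
  shows "(deriv ^^ k) (\<lambda>w. exp (x * w) * \<rho> w) z = exp_leibniz k \<rho> x z"
proof -
  have "(deriv ^^ k) (\<lambda>w. exp (x * w) * \<rho> w) z =
     (\<Sum>i = 0..k. of_nat (k choose i) * (deriv ^^ i) (\<lambda>w. exp (x * w)) z * (deriv ^^ (k - i)) \<rho> z)"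
    by (rule higher_deriv_mult[OF _ assms]) (auto intro: holomorphic_intros)
  then show ?thesis
    unfolding exp_leibniz_def higher_deriv_exp_linear by (simp add: mult_ac)
qed

lemma exp_leibniz_cong:
  assumes "\<rho>1 holomorphic_on S" "\<rho>2 holomorphic_on S" "open S" "z \<in> S"
    "\<And>w. w \<in> S \<Longrightarrow> \<rho>1 w = \<rho>2 w"
  shows "exp_leibniz k \<rho>1 x z = exp_leibniz k \<rho>2 x z"
  unfolding exp_leibniz_def
  by (rule sum.cong[OF refl]) (simp add: higher_deriv_transform_within_open[OF assms])

lemma exp_leibniz_sum:
  assumes "finite I" "\<And>i. i \<in> I \<Longrightarrow> \<rho> i holomorphic_on S" "open S" "z \<in> S"
  shows "exp_leibniz k (\<lambda>w. \<Sum>i\<in>I. c i * \<rho> i w) x z = (\<Sum>i\<in>I. c i * exp_leibniz k (\<rho> i) x z)"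
  using higher_deriv_sum_cmult[OF assms, where c = c] unfolding exp_leibniz_def
  by (simp add: sum_distrib_left sum_distrib_right mult_ac sum.swap[of _ "{0..k}"])

lemma exp_leibniz_add:
  assumes "\<rho>1 holomorphic_on S" "\<rho>2 holomorphic_on S" "open S" "z \<in> S"
  shows "exp_leibniz k (\<lambda>w. \<rho>1 w + \<rho>2 w) x z = exp_leibniz k \<rho>1 x z + exp_leibniz k \<rho>2 x z"
  unfolding exp_leibniz_def higher_deriv_add[OF assms]
  by (simp add: sum.distrib algebra_simps)

lemma exp_leibniz_one: "exp_leibniz k (\<lambda>w. 1) x z = x ^ k * exp (x * z)"
proof -
  have "exp_leibniz k (\<lambda>w. 1) x z = (\<Sum>i = 0..k. if i = k then x ^ k * exp (x * z) else 0)"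
    unfolding exp_leibniz_def by (rule sum.cong) auto
  then show ?thesis by simp
qed

lemma exp_leibniz_holomorphic: "(\<lambda>x. exp_leibniz k \<rho> x z) holomorphic_on A"
  unfolding exp_leibniz_def by (auto intro!: holomorphic_intros)

lemma exp_leibniz_Suc:
  assumes "\<rho> holomorphic_on S" "open S" "z \<in> S"
  shows "exp_leibniz (Suc k) \<rho> x z = x * exp_leibniz k \<rho> x z + exp_leibniz k (deriv \<rho>) x z"
proof -
  have hd: "deriv \<rho> holomorphic_on S"
    using assms by (auto intro: holomorphic_deriv)
  have h1: "(\<lambda>w. x * (exp (x * w) * \<rho> w)) holomorphic_on S"
    using assms by (auto intro!: holomorphic_intros)
  have h2: "(\<lambda>w. exp (x * w) * deriv \<rho> w) holomorphic_on S"
    using hd by (auto intro!: holomorphic_intros)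
  have d: "deriv (\<lambda>w. exp (x * w) * \<rho> w) w = x * (exp (x * w) * \<rho> w) + exp (x * w) * deriv \<rho> w"
    if "w \<in> S" for w
    using holomorphic_derivI[OF assms(1,2) that]
    by (intro DERIV_imp_deriv) (auto intro!: derivative_eq_intros simp: algebra_simps)
  have "exp_leibniz (Suc k) \<rho> x z = (deriv ^^ k) (deriv (\<lambda>w. exp (x * w) * \<rho> w)) z"
    by (simp add: higher_deriv_exp_mult[OF assms, symmetric] funpow_Suc_right del: funpow.simps)
  also have "\<dots> = (deriv ^^ k) (\<lambda>w. x * (exp (x * w) * \<rho> w) + exp (x * w) * deriv \<rho> w) z"
    by (rule higher_deriv_transform_within_open[OF _ _ assms(2,3)])
       (use assms h1 h2 d in \<open>auto intro!: holomorphic_intros holomorphic_deriv\<close>)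
  also have "\<dots> = x * (deriv ^^ k) (\<lambda>w. exp (x * w) * \<rho> w) z
      + (deriv ^^ k) (\<lambda>w. exp (x * w) * deriv \<rho> w) z"
    using assms higher_deriv_cmult[of "\<lambda>w. exp (x * w) * \<rho> w" S z k x]
    by (simp add: higher_deriv_add[OF h1 h2 assms(2,3)] holomorphic_intros)
  also have "\<dots> = x * exp_leibniz k \<rho> x z + exp_leibniz k (deriv \<rho>) x z"
    using higher_deriv_exp_mult[OF assms] higher_deriv_exp_mult[OF hd assms(2,3)] by simp
  finally show ?thesis .
qed

lemma has_field_derivative_exp_leibniz:
  assumes "\<rho> holomorphic_on S" "open S" "z \<in> S"
  shows "((\<lambda>x. exp_leibniz k \<rho> x z) has_field_derivative exp_leibniz k (\<lambda>w. w * \<rho> w) x z) (at x)"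
  using assms(1)
proof (induction k arbitrary: \<rho> x)
  case 0
  show ?case
    unfolding exp_leibniz_def by (auto intro!: derivative_eq_intros simp: algebra_simps)
next
  case (Suc k)
  have hd: "deriv \<rho> holomorphic_on S"
    using Suc.prems assms by (auto intro: holomorphic_deriv)
  have hw: "(\<lambda>w. w * \<rho> w) holomorphic_on S" and hwd: "(\<lambda>w. w * deriv \<rho> w) holomorphic_on S"
    using Suc.prems hd by (auto intro!: holomorphic_intros)
  have deq: "deriv (\<lambda>w. w * \<rho> w) w = \<rho> w + w * deriv \<rho> w" if "w \<in> S" for w
    using holomorphic_derivI[OF Suc.prems assms(2) that]
    by (intro DERIV_imp_deriv) (auto intro!: derivative_eq_intros)
  have "exp_leibniz (Suc k) (\<lambda>w. w * \<rho> w) x z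
      = x * exp_leibniz k (\<lambda>w. w * \<rho> w) x z + exp_leibniz k (deriv (\<lambda>w. w * \<rho> w)) x z"
    by (rule exp_leibniz_Suc[OF hw assms(2,3)])
  also have "exp_leibniz k (deriv (\<lambda>w. w * \<rho> w)) x z = exp_leibniz k (\<lambda>w. \<rho> w + w * deriv \<rho> w) x z"
    by (rule exp_leibniz_cong[OF _ _ assms(2,3)])
       (auto intro!: holomorphic_intros holomorphic_deriv hw Suc.prems hwd assms simp: deq)
  also have "\<dots> = exp_leibniz k \<rho> x z + exp_leibniz k (\<lambda>w. w * deriv \<rho> w) x z"
    by (rule exp_leibniz_add[OF Suc.prems hwd assms(2,3)])
  finally have "exp_leibniz (Suc k) (\<lambda>w. w * \<rho> w) x z = exp_leibniz k \<rho> x z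
      + x * exp_leibniz k (\<lambda>w. w * \<rho> w) x z + exp_leibniz k (\<lambda>w. w * deriv \<rho> w) x z"
    by (simp add: algebra_simps)
  moreover have "((\<lambda>x. x * exp_leibniz k \<rho> x z + exp_leibniz k (deriv \<rho>) x z) has_field_derivative
      exp_leibniz k \<rho> x z + x * exp_leibniz k (\<lambda>w. w * \<rho> w) x z
      + exp_leibniz k (\<lambda>w. w * deriv \<rho> w) x z) (at x)"
    using Suc.IH[OF Suc.prems, of x] Suc.IH[OF hd, of x]
    by (auto intro!: derivative_eq_intros)
  ultimately show ?case
    using exp_leibniz_Suc[OF Suc.prems assms(2,3)] by simp
qed

lemma higher_deriv_exp_leibniz:
  assumes "\<rho> holomorphic_on S" "open S" "z \<in> S"
  shows "(deriv ^^ i) (\<lambda>x. exp_leibniz k \<rho> x z) x = exp_leibniz k (\<lambda>w. w ^ i * \<rho> w) x z"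
  using assms(1)
proof (induction i arbitrary: \<rho>)
  case (Suc i)
  have "(\<lambda>w. w * \<rho> w) holomorphic_on S"
    using Suc.prems by (auto intro!: holomorphic_intros)
  moreover have "deriv (\<lambda>x. exp_leibniz k \<rho> x z) = (\<lambda>x. exp_leibniz k (\<lambda>w. w * \<rho> w) x z)"
    using has_field_derivative_exp_leibniz[OF Suc.prems assms(2,3)] DERIV_imp_deriv by blast
  ultimately show ?case
    using Suc.IH by (simp add: funpow_Suc_right mult_ac del: funpow.simps)
qed simp

section \<open>Polynomial-exponential functions\<close>

definition polyexp :: "(complex \<Rightarrow> complex) \<Rightarrow> bool" where
  "polyexp g \<longleftrightarrow> (\<exists>p. finite_supp p \<and> g = pe_fun p)"

definition pe_monomial :: "nat \<times> complex \<Rightarrow> complex \<Rightarrow> complex" where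
  "pe_monomial t x = x ^ fst t * exp (snd t * x)"

named_theorems polyexp_intros

lemma pe_fun_eq_sum_superset:
  assumes "finite A" "{t. p t \<noteq> 0} \<subseteq> A"
  shows "pe_fun p x = (\<Sum>t\<in>A. p t * pe_monomial t x)"
proof -
  have "pe_fun p x = (\<Sum>t\<in>{t. p t \<noteq> 0}. p t * pe_monomial t x)"
    unfolding pe_fun_def pe_monomial_def by (simp add: mult.assoc)
  also have "\<dots> = (\<Sum>t\<in>A. p t * pe_monomial t x)"
    by (rule sum.mono_neutral_left) (use assms in auto)
  finally show ?thesis .
qed

lemma polyexp_pe_fun [polyexp_intros]: "finite_supp p \<Longrightarrow> polyexp (pe_fun p)"
  unfolding polyexp_def by blast

lemma polyexp_zero: "polyexp (\<lambda>x. 0)"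
  unfolding polyexp_def finite_supp_def
  by (rule exI[of _ "\<lambda>t. 0"]) (auto simp: pe_fun_def fun_eq_iff)

lemma polyexp_pe_monomial: "polyexp (pe_monomial t)"
proof -
  let ?p = "\<lambda>s. if s = t then (1::complex) else 0"
  have "pe_monomial t x = pe_fun ?p x" for x
    using pe_fun_eq_sum_superset[of "{t}" ?p x] by simp
  then show ?thesis
    unfolding polyexp_def finite_supp_def by (intro exI[of _ ?p]) auto
qed

lemma polyexp_add [polyexp_intros]:
  assumes "polyexp f" "polyexp g"
  shows "polyexp (\<lambda>x. f x + g x)"
proof -
  obtain p q where p: "finite {t. p t \<noteq> 0}" "f = pe_fun p" and q: "finite {t. q t \<noteq> 0}" "g = pe_fun q"
    using assms unfolding polyexp_def finite_supp_def by blast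
  let ?A = "{t. p t \<noteq> 0} \<union> {t. q t \<noteq> 0}"
  have fin: "finite {t. p t + q t \<noteq> 0}"
    by (rule finite_subset[of _ ?A]) (use p q in auto)
  have "pe_fun (\<lambda>t. p t + q t) x = f x + g x" for x
  proof -
    have "pe_fun (\<lambda>t. p t + q t) x = (\<Sum>t\<in>?A. (p t + q t) * pe_monomial t x)"
      by (rule pe_fun_eq_sum_superset) (use p q in auto)
    also have "\<dots> = f x + g x"
      using pe_fun_eq_sum_superset[of ?A p x] pe_fun_eq_sum_superset[of ?A q x] p q
      by (auto simp: sum.distrib algebra_simps)
    finally show ?thesis .
  qed
  then show ?thesis
    using fin unfolding polyexp_def finite_supp_def by (intro exI[of _ "\<lambda>t. p t + q t"]) auto
qed

lemma polyexp_cmult [polyexp_intros]: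
  assumes "polyexp f"
  shows "polyexp (\<lambda>x. c * f x)"
proof -
  obtain p where p: "finite {t. p t \<noteq> 0}" "f = pe_fun p"
    using assms unfolding polyexp_def finite_supp_def by blast
  have fin: "finite {t. c * p t \<noteq> 0}"
    by (rule finite_subset[of _ "{t. p t \<noteq> 0}"]) (use p in auto)
  have "pe_fun (\<lambda>t. c * p t) x = c * f x" for x
  proof -
    have "pe_fun (\<lambda>t. c * p t) x = (\<Sum>t\<in>{t. p t \<noteq> 0}. c * p t * pe_monomial t x)"
      by (rule pe_fun_eq_sum_superset) (use p in auto)
    also have "\<dots> = c * f x"
      using pe_fun_eq_sum_superset[OF p(1) order_refl] p(2) by (simp add: sum_distrib_left mult.assoc)
    finally show ?thesis .
  qed
  then show ?thesis
    using fin unfolding polyexp_def finite_supp_def by (intro exI[of _ "\<lambda>t. c * p t"]) auto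
qed

lemma polyexp_induct [consumes 1, case_names zero monomial cmult add]:
  assumes "polyexp g"
    and "P (\<lambda>x. 0)"
    and "\<And>t. P (pe_monomial t)"
    and "\<And>c f. P f \<Longrightarrow> P (\<lambda>x. c * f x)"
    and "\<And>f g. P f \<Longrightarrow> P g \<Longrightarrow> P (\<lambda>x. f x + g x)"
  shows "P g"
proof -
  obtain p where p: "finite {t. p t \<noteq> 0}" "g = pe_fun p"
    using assms(1) unfolding polyexp_def finite_supp_def by blast
  have "P (\<lambda>x. \<Sum>t\<in>A. p t * pe_monomial t x)" if "finite A" for A
    using that
  proof (induction A rule: finite_induct)
    case (insert t A)
    then show ?case using assms(5)[OF assms(4)[OF assms(3)] insert.IH] by simp
  qed (simp add: assms(2))
  moreover have "g = (\<lambda>x. \<Sum>t\<in>{t. p t \<noteq> 0}. p t * pe_monomial t x)"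
    using p pe_fun_eq_sum_superset by auto
  ultimately show ?thesis using p by simp
qed

lemma polyexp_sum [polyexp_intros]:
  "finite I \<Longrightarrow> (\<And>i. i \<in> I \<Longrightarrow> polyexp (f i)) \<Longrightarrow> polyexp (\<lambda>x. \<Sum>i\<in>I. f i x)"
  by (induction I rule: finite_induct) (auto intro: polyexp_zero polyexp_add)

lemma polyexp_const [polyexp_intros]: "polyexp (\<lambda>x. c)"
  using polyexp_cmult[OF polyexp_pe_monomial, of c "(0, 0)"] by (simp add: pe_monomial_def)

lemma polyexp_mult_pe_monomial:
  assumes "polyexp f"
  shows "polyexp (\<lambda>x. f x * pe_monomial s x)"
  using assms
proof (induction rule: polyexp_induct)
  case zero
  then show ?case using polyexp_zero by simp
next
  case (monomial t)
  have "(\<lambda>x. pe_monomial t x * pe_monomial s x) = pe_monomial (fst t + fst s, snd t + snd s)"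
    by (auto simp: pe_monomial_def fun_eq_iff power_add exp_add algebra_simps)
  then show ?case using polyexp_pe_monomial by metis
next
  case (cmult c f)
  then show ?case using polyexp_cmult[of "\<lambda>x. f x * pe_monomial s x" c] by (simp add: mult.assoc)
next
  case (add f g)
  then show ?case
    using polyexp_add[of "\<lambda>x. f x * pe_monomial s x" "\<lambda>x. g x * pe_monomial s x"]
    by (simp add: algebra_simps)
qed

lemma polyexp_mult [polyexp_intros]:
  assumes "polyexp f" "polyexp g"
  shows "polyexp (\<lambda>x. f x * g x)"
  using assms(2)
proof (induction rule: polyexp_induct)
  case zero
  then show ?case using polyexp_zero by simp
next
  case (monomial t)
  then show ?case using polyexp_mult_pe_monomial[OF assms(1)] by simp
next
  case (cmult c g)
  then show ?case using polyexp_cmult[of "\<lambda>x. f x * g x" c] by (simp add: algebra_simps)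
next
  case (add g h)
  then show ?case using polyexp_add[of "\<lambda>x. f x * g x" "\<lambda>x. f x * h x"] by (simp add: algebra_simps)
qed

lemma polyexp_prod [polyexp_intros]:
  "finite I \<Longrightarrow> (\<And>i. i \<in> I \<Longrightarrow> polyexp (f i)) \<Longrightarrow> polyexp (\<lambda>x. \<Prod>i\<in>I. f i x)"
  by (induction I rule: finite_induct) (auto intro: polyexp_const polyexp_mult)

lemma polyexp_power [polyexp_intros]: "polyexp f \<Longrightarrow> polyexp (\<lambda>x. f x ^ k)"
  using polyexp_prod[of "{..<k}" "\<lambda>i. f"] by simp

lemma polyexp_diff [polyexp_intros]: "polyexp f \<Longrightarrow> polyexp g \<Longrightarrow> polyexp (\<lambda>x. f x - g x)"
  using polyexp_add[of f "\<lambda>x. - 1 * g x"] polyexp_cmult[of g "- 1"] by simp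

lemma polyexp_If [polyexp_intros]:
  "(P \<Longrightarrow> polyexp f) \<Longrightarrow> (\<not> P \<Longrightarrow> polyexp g) \<Longrightarrow> polyexp (\<lambda>x. if P then f x else g x)"
  by (cases P) (simp_all add: eta_contract_eq)

lemma polyexp_exp [polyexp_intros]: "polyexp (\<lambda>x. exp (\<mu> * x))"
  using polyexp_pe_monomial[of "(0, \<mu>)"] by (simp add: pe_monomial_def[abs_def])

lemma polyexp_ident_power [polyexp_intros]: "polyexp (\<lambda>x. x ^ k)"
  using polyexp_pe_monomial[of "(k, 0)"] by (simp add: pe_monomial_def[abs_def])

lemma polyexp_holomorphic: "polyexp f \<Longrightarrow> f holomorphic_on A"
  by (induction rule: polyexp_induct) (auto simp: pe_monomial_def intro!: holomorphic_intros)

lemma polyexp_has_derivative: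
  assumes "polyexp f"
  shows "\<exists>g. polyexp g \<and> (\<forall>x. (f has_field_derivative g x) (at x))"
  using assms
proof (induction rule: polyexp_induct)
  case zero
  then show ?case using polyexp_zero by auto
next
  case (monomial t)
  obtain k \<mu> where t: "t = (k, \<mu>)" by (cases t)
  let ?g = "\<lambda>x. of_nat k * x ^ (k - 1) * exp (\<mu> * x) + \<mu> * (x ^ k * exp (\<mu> * x))"
  have "polyexp ?g"
    by (intro polyexp_intros)
  moreover have "\<forall>x. (pe_monomial t has_field_derivative ?g x) (at x)"
    unfolding pe_monomial_def t by (auto intro!: derivative_eq_intros simp: algebra_simps)
  ultimately show ?case by blast
next
  case (cmult c f)
  then obtain g where "polyexp g" "\<forall>x. (f has_field_derivative g x) (at x)" by blast
  then show ?case
    by (intro exI[of _ "\<lambda>x. c * g x"]) (auto intro!: derivative_eq_intros polyexp_cmult)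
next
  case (add f h)
  then obtain g1 g2 where "polyexp g1" "\<forall>x. (f has_field_derivative g1 x) (at x)"
     "polyexp g2" "\<forall>x. (h has_field_derivative g2 x) (at x)" by blast
  then show ?case
    by (intro exI[of _ "\<lambda>x. g1 x + g2 x"]) (auto intro!: derivative_eq_intros polyexp_add)
qed

lemma polyexp_deriv [polyexp_intros]: "polyexp f \<Longrightarrow> polyexp (deriv f)"
  using polyexp_has_derivative DERIV_imp_deriv by (metis (no_types, lifting) ext)

lemma polyexp_higher_deriv [polyexp_intros]: "polyexp f \<Longrightarrow> polyexp ((deriv ^^ k) f)"
  by (induction k) (auto intro: polyexp_deriv)

section \<open>Linear differential operators\<close>

definition diffop :: "nat \<Rightarrow> (nat \<Rightarrow> complex \<Rightarrow> complex) \<Rightarrow> (complex \<Rightarrow> complex) \<Rightarrow> complex \<Rightarrow> complex" where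
  "diffop m a g x = (\<Sum>j\<le>m. a j x * (deriv ^^ j) g x)"

definition order_le :: "nat \<Rightarrow> (nat \<Rightarrow> complex \<Rightarrow> complex) \<Rightarrow> bool" where
  "order_le m a \<longleftrightarrow> (\<forall>j>m. a j = (\<lambda>x. 0))"

text \<open>The coefficients of \<open>\<partial> \<circ> L\<close> for \<open>L = \<Sum>j a\<^sub>j \<partial>\<^sup>j\<close>.\<close>

definition deriv_coeffs :: "(nat \<Rightarrow> complex \<Rightarrow> complex) \<Rightarrow> nat \<Rightarrow> complex \<Rightarrow> complex" where
  "deriv_coeffs a j x = deriv (a j) x + (if j = 0 then 0 else a (j - 1) x)"

lemma order_le_mono: "order_le m a \<Longrightarrow> m \<le> M \<Longrightarrow> order_le M a"
  unfolding order_le_def by auto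

lemma diffop_order_le:
  assumes "order_le m a" "m \<le> M"
  shows "diffop M a g x = diffop m a g x"
  unfolding diffop_def
  by (rule sum.mono_neutral_right) (use assms in \<open>auto simp: order_le_def\<close>)

lemma diffop_cong: "(\<And>j. (deriv ^^ j) g x = (deriv ^^ j) h x) \<Longrightarrow> diffop m a g x = diffop m a h x"
  unfolding diffop_def by simp

lemma diffop_zero_fun: "diffop m a (\<lambda>y. 0) x = 0"
  unfolding diffop_def by (simp add: higher_deriv_const)

lemma diffop_holomorphic:
  "(\<And>j. a j holomorphic_on UNIV) \<Longrightarrow> g holomorphic_on UNIV \<Longrightarrow> (\<lambda>x. diffop m a g x) holomorphic_on UNIV"
  unfolding diffop_def by (auto intro!: holomorphic_intros)

lemma order_le_deriv_coeffs: "order_le m a \<Longrightarrow> order_le (Suc m) (deriv_coeffs a)"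
  unfolding order_le_def deriv_coeffs_def by (auto intro!: ext)

lemma deriv_coeffs_top: "order_le m a \<Longrightarrow> deriv_coeffs a (Suc m) = a m"
  unfolding order_le_def deriv_coeffs_def by (auto intro!: ext)

lemma holomorphic_deriv_coeffs:
  "(\<And>j. a j holomorphic_on UNIV) \<Longrightarrow> deriv_coeffs a j holomorphic_on UNIV"
  unfolding deriv_coeffs_def by (cases "j = 0") (auto intro!: holomorphic_intros holomorphic_deriv)

lemma polyexp_deriv_coeffs: "(\<And>j. polyexp (a j)) \<Longrightarrow> polyexp (deriv_coeffs a j)"
  unfolding deriv_coeffs_def by (cases "j = 0") (auto intro: polyexp_intros)

lemma order_le_iter_deriv_coeffs: "order_le m a \<Longrightarrow> order_le (m + r) ((deriv_coeffs ^^ r) a)"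
  by (induction r) (auto intro: order_le_deriv_coeffs)

lemma holomorphic_iter_deriv_coeffs:
  "(\<And>j. a j holomorphic_on UNIV) \<Longrightarrow> (deriv_coeffs ^^ r) a j holomorphic_on UNIV"
  by (induction r arbitrary: j) (auto intro: holomorphic_deriv_coeffs)

lemma polyexp_iter_deriv_coeffs: "(\<And>j. polyexp (a j)) \<Longrightarrow> polyexp ((deriv_coeffs ^^ r) a j)"
  by (induction r arbitrary: j) (auto intro: polyexp_deriv_coeffs)

lemma iter_deriv_coeffs_top: "order_le m a \<Longrightarrow> (deriv_coeffs ^^ r) a (m + r) = a m"
  by (induction r) (simp_all add: deriv_coeffs_top order_le_iter_deriv_coeffs)

lemma has_field_derivative_diffop:
  assumes "\<And>j. a j holomorphic_on UNIV" "order_le m a" "g holomorphic_on UNIV"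
  shows "((\<lambda>x. diffop m a g x) has_field_derivative diffop (Suc m) (deriv_coeffs a) g x) (at x)"
proof -
  have D: "((\<lambda>x. diffop m a g x) has_field_derivative
      (\<Sum>j\<le>m. deriv (a j) x * (deriv ^^ j) g x + a j x * (deriv ^^ Suc j) g x)) (at x)"
    unfolding diffop_def using assms(1,3)
    by (intro DERIV_sum)
       (auto intro!: derivative_eq_intros holomorphic_derivI has_field_derivative_higher_deriv)
  have "diffop (Suc m) (deriv_coeffs a) g x = (\<Sum>j\<le>Suc m. deriv (a j) x * (deriv ^^ j) g x)
      + (\<Sum>j\<le>Suc m. (if j = 0 then 0 else a (j - 1) x) * (deriv ^^ j) g x)"
    unfolding diffop_def deriv_coeffs_def by (simp add: distrib_right sum.distrib)
  also have "(\<Sum>j\<le>Suc m. deriv (a j) x * (deriv ^^ j) g x) = (\<Sum>j\<le>m. deriv (a j) x * (deriv ^^ j) g x)"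
    using assms(2) by (simp add: order_le_def)
  also have "(\<Sum>j\<le>Suc m. (if j = 0 then 0 else a (j - 1) x) * (deriv ^^ j) g x)
      = (\<Sum>j\<le>m. a j x * (deriv ^^ Suc j) g x)"
    by (subst sum.atMost_Suc_shift) simp
  finally show ?thesis
    using D by (simp add: sum.distrib)
qed

lemma higher_deriv_diffop:
  assumes "\<And>j. a j holomorphic_on UNIV" "order_le m a" "g holomorphic_on UNIV"
  shows "(deriv ^^ r) (\<lambda>x. diffop m a g x) x = diffop (m + r) ((deriv_coeffs ^^ r) a) g x"
proof (induction r arbitrary: x)
  case (Suc r)
  have "(deriv ^^ r) (\<lambda>x. diffop m a g x) = (\<lambda>x. diffop (m + r) ((deriv_coeffs ^^ r) a) g x)"
    using Suc.IH by auto
  then show ?case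
    using DERIV_imp_deriv[OF has_field_derivative_diffop[OF holomorphic_iter_deriv_coeffs[OF assms(1)]
          order_le_iter_deriv_coeffs[OF assms(2)] assms(3)]] by simp
qed simp

abbreviation op_xpow :: "nat \<times> complex \<times> nat \<Rightarrow> nat" where "op_xpow t \<equiv> fst t"
abbreviation op_exp :: "nat \<times> complex \<times> nat \<Rightarrow> complex" where "op_exp t \<equiv> fst (snd t)"
abbreviation op_ord :: "nat \<times> complex \<times> nat \<Rightarrow> nat" where "op_ord t \<equiv> snd (snd t)"

definition peop_coeff :: "peop \<Rightarrow> nat \<Rightarrow> complex \<Rightarrow> complex" where
  "peop_coeff L j x = (\<Sum>t\<in>{t. L t \<noteq> 0 \<and> op_ord t = j}. L t * x ^ op_xpow t * exp (op_exp t * x))"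

lemma polyexp_peop_coeff: "finite_supp L \<Longrightarrow> polyexp (peop_coeff L j)"
  unfolding peop_coeff_def[abs_def] finite_supp_def by (intro polyexp_intros) auto

lemma peop_apply_eq_diffop:
  assumes "finite_supp L" "\<And>t. L t \<noteq> 0 \<Longrightarrow> snd (snd t) \<le> m"
  shows "peop_apply L f x = diffop m (peop_coeff L) f x"
proof -
  let ?S = "{t. L t \<noteq> 0}"
  let ?h = "\<lambda>t. L t * x ^ fst t * exp (fst (snd t) * x) * (deriv ^^ snd (snd t)) f x"
  have "peop_apply L f x = (\<Sum>t\<in>?S. ?h t)"
    unfolding peop_apply_def by (rule sum.cong) (auto split: prod.splits)
  also have "\<dots> = (\<Sum>j\<le>m. \<Sum>t\<in>{t\<in>?S. snd (snd t) = j}. ?h t)"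
    by (rule sum.group[symmetric]) (use assms in \<open>auto simp: finite_supp_def\<close>)
  also have "\<dots> = diffop m (peop_coeff L) f x"
    unfolding diffop_def peop_coeff_def sum_distrib_right
    by (intro sum.cong refl) auto
  finally show ?thesis .
qed

lemma order_le_peop_coeff:
  assumes "finite_supp L"
  obtains m where "order_le m (peop_coeff L)" "\<And>f x. peop_apply L f x = diffop m (peop_coeff L) f x"
proof
  let ?m = "Max (insert 0 ((\<lambda>t. snd (snd t)) ` {t. L t \<noteq> 0}))"
  have fin: "finite {t. L t \<noteq> 0}" using assms unfolding finite_supp_def .
  have le: "snd (snd t) \<le> ?m" if "L t \<noteq> 0" for t
    using fin that by (intro Max_ge) auto
  show "order_le ?m (peop_coeff L)"
    unfolding order_le_def peop_coeff_def using le by (force intro!: ext sum.neutral)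
  show "peop_apply L f x = diffop ?m (peop_coeff L) f x" for f x
    by (rule peop_apply_eq_diffop[OF assms le])
qed

lemma exists_peop_eq_diffop:
  assumes "\<And>j. j \<le> m \<Longrightarrow> polyexp (a j)"
  shows "\<exists>L. finite_supp L \<and> (\<forall>f x. peop_apply L f x = diffop m a f x)"
proof -
  obtain P where P: "\<And>j. j \<le> m \<Longrightarrow> finite {t. P j t \<noteq> 0} \<and> a j = pe_fun (P j)"
    using assms unfolding polyexp_def finite_supp_def by metis
  define L :: peop where "L = (\<lambda>(k, \<mu>, j). if j \<le> m then P j (k, \<mu>) else 0)"
  let ?emb = "\<lambda>j (k, \<mu>). (k, \<mu>, j)"
  have fin: "finite {t. L t \<noteq> 0}"
  proof (rule finite_subset)
    show "{t. L t \<noteq> 0} \<subseteq> (\<Union>j\<le>m. ?emb j ` {t. P j t \<noteq> 0})"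
      by (force simp: L_def split: if_splits)
  qed (use P in auto)
  have "peop_coeff L j x = a j x" if "j \<le> m" for j x
  proof -
    have img: "{t. L t \<noteq> 0 \<and> snd (snd t) = j} = ?emb j ` {t. P j t \<noteq> 0}"
      using that by (force simp: L_def split: if_splits)
    have inj: "inj_on (?emb j) {t. P j t \<noteq> 0}"
      by (auto simp: inj_on_def)
    have "peop_coeff L j x = (\<Sum>t\<in>{t. P j t \<noteq> 0}. P j t * x ^ fst t * exp (snd t * x))"
      unfolding peop_coeff_def img sum.reindex[OF inj]
      by (rule sum.cong) (use that in \<open>auto simp: L_def split: prod.splits\<close>)
    also have "\<dots> = a j x" using P[OF that] by (simp add: pe_fun_def)
    finally show ?thesis .
  qed
  moreover have "peop_apply L f x = diffop m (peop_coeff L) f x" for f x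
    by (rule peop_apply_eq_diffop) (use fin in \<open>auto simp: finite_supp_def L_def split: if_splits\<close>)
  ultimately show ?thesis
    using fin unfolding finite_supp_def diffop_def by auto
qed

section \<open>Distributions and the polynomial \<open>q\<^sub>C\<close>\<close>

lemma dapp_eq_sum_superset:
  assumes "finite A" "{p. c p \<noteq> 0} \<subseteq> A"
  shows "dapp c f = (\<Sum>p\<in>A. c p * (deriv ^^ snd p) f (fst p))"
  unfolding dapp_def by (rule sum.mono_neutral_left) (use assms in auto)

lemma dapp_exp: "dapp c (\<lambda>z. exp (x * z)) = (\<Sum>p\<in>{p. c p \<noteq> 0}. c p * (x ^ snd p * exp (fst p * x)))"
  unfolding dapp_def higher_deriv_exp_linear by (simp add: mult.commute)

lemma polyexp_dapp_exp: "finite_supp c \<Longrightarrow> polyexp (\<lambda>x. dapp c (\<lambda>z. exp (x * z)))"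
  unfolding dapp_exp finite_supp_def by (intro polyexp_intros) auto

lemma polyexp_cexp: "finite_supp (cs j) \<Longrightarrow> polyexp (cexp cs j)"
  unfolding cexp_def by (rule polyexp_dapp_exp)

lemma sum_mult_nonzero_imp_nonzero:
  "(\<Sum>i\<in>I. a i * b i) \<noteq> (0::'a::semiring_0) \<Longrightarrow> \<exists>i\<in>I. b i \<noteq> 0"
  by (metis (no_types, lifting) mult_zero_right sum.neutral)

lemma dapp_sum_fun:
  assumes "finite I" "\<And>i. i \<in> I \<Longrightarrow> f i holomorphic_on UNIV"
  shows "dapp c (\<lambda>z. \<Sum>i\<in>I. a i * f i z) = (\<Sum>i\<in>I. a i * dapp c (f i))"
  using higher_deriv_sum_cmult[OF assms open_UNIV UNIV_I, where c = a] unfolding dapp_def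
  by (simp add: sum_distrib_left mult_ac sum.swap[of _ I])

lemma finite_supp_sum:
  assumes "finite I" "\<And>i. i \<in> I \<Longrightarrow> finite_supp (cs i)"
  shows "finite_supp (\<lambda>p. \<Sum>i\<in>I. a i * cs i p)"
proof -
  have "{p. (\<Sum>i\<in>I. a i * cs i p) \<noteq> 0} \<subseteq> (\<Union>i\<in>I. {p. cs i p \<noteq> 0})"
    by (auto dest: sum_mult_nonzero_imp_nonzero)
  then show ?thesis
    using assms unfolding finite_supp_def by (auto intro: finite_subset)
qed

lemma dapp_sum_distr:
  assumes "finite I" "\<And>i. i \<in> I \<Longrightarrow> finite_supp (cs i)"
  shows "dapp (\<lambda>p. \<Sum>i\<in>I. a i * cs i p) f = (\<Sum>i\<in>I. a i * dapp (cs i) f)"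
proof -
  let ?A = "\<Union>i\<in>I. {p. cs i p \<noteq> 0}"
  have finA: "finite ?A" using assms unfolding finite_supp_def by auto
  have "dapp (\<lambda>p. \<Sum>i\<in>I. a i * cs i p) f = (\<Sum>p\<in>?A. (\<Sum>i\<in>I. a i * cs i p) * (deriv ^^ snd p) f (fst p))"
    by (rule dapp_eq_sum_superset[OF finA]) (auto dest: sum_mult_nonzero_imp_nonzero)
  also have "\<dots> = (\<Sum>i\<in>I. a i * (\<Sum>p\<in>?A. cs i p * (deriv ^^ snd p) f (fst p)))"
    by (simp add: sum_distrib_right sum_distrib_left mult.assoc sum.swap[of _ ?A])
  also have "\<dots> = (\<Sum>i\<in>I. a i * dapp (cs i) f)"
    by (intro sum.cong refl arg_cong2[where f = "(*)"] dapp_eq_sum_superset[symmetric] finA) auto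
  finally show ?thesis .
qed

lemma higher_deriv_dapp_exp:
  assumes "finite_supp c"
  shows "(deriv ^^ i) (\<lambda>x. dapp c (\<lambda>z. exp (x * z))) x = dapp c (\<lambda>z. z ^ i * exp (x * z))"
proof -
  let ?S = "{p. c p \<noteq> 0}"
  have fin: "finite ?S" using assms unfolding finite_supp_def .
  have hol: "exp_leibniz (snd p) (\<lambda>w. w ^ i) x (fst p) = (deriv ^^ snd p) (\<lambda>z. z ^ i * exp (x * z)) (fst p)"
    for p
    using higher_deriv_exp_mult[of "\<lambda>w. w ^ i" UNIV "fst p" "snd p" x]
    by (simp add: mult.commute holomorphic_intros)
  have "(\<lambda>x. dapp c (\<lambda>z. exp (x * z))) = (\<lambda>x. \<Sum>p\<in>?S. c p * exp_leibniz (snd p) (\<lambda>w. 1) x (fst p))"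
    unfolding dapp_exp exp_leibniz_one by (simp add: mult.commute)
  then have "(deriv ^^ i) (\<lambda>x. dapp c (\<lambda>z. exp (x * z))) x
      = (\<Sum>p\<in>?S. c p * (deriv ^^ i) (\<lambda>x. exp_leibniz (snd p) (\<lambda>w. 1) x (fst p)) x)"
    by (simp add: higher_deriv_sum_cmult[OF fin exp_leibniz_holomorphic open_UNIV UNIV_I])
  also have "\<dots> = dapp c (\<lambda>z. z ^ i * exp (x * z))"
    unfolding dapp_def
    using higher_deriv_exp_leibniz[of "\<lambda>w. 1" UNIV, simplified] hol by simp
  finally show ?thesis .
qed

lemma poly_diff_dapp_exp:
  assumes "finite_supp c"
  shows "poly_diff q (\<lambda>x. dapp c (\<lambda>z. exp (x * z))) x = dapp c (\<lambda>z. poly q z * exp (x * z))"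
proof -
  have "poly_diff q (\<lambda>x. dapp c (\<lambda>z. exp (x * z))) x
      = (\<Sum>i\<le>degree q. coeff q i * dapp c (\<lambda>z. z ^ i * exp (x * z)))"
    unfolding poly_diff_def higher_deriv_dapp_exp[OF assms] ..
  also have "\<dots> = dapp c (\<lambda>z. \<Sum>i\<le>degree q. coeff q i * (z ^ i * exp (x * z)))"
    by (rule dapp_sum_fun[symmetric]) (auto intro!: holomorphic_intros)
  also have "(\<lambda>z. \<Sum>i\<le>degree q. coeff q i * (z ^ i * exp (x * z))) = (\<lambda>z. poly q z * exp (x * z))"
    by (auto simp: poly_altdef sum_distrib_right mult.assoc)
  finally show ?thesis .
qed

lemma higher_deriv_linear_power_at:
  "(deriv ^^ i) (\<lambda>w. (w - a) ^ k) (a::complex) = (if i = k then fact k else 0)"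
proof -
  have "(deriv ^^ i) (\<lambda>w. (w - a) ^ k) a = pochhammer (of_nat (Suc k - i)) i * (a - a) ^ (k - i)"
    by (rule higher_deriv_power)
  then show ?thesis
    by (cases "i = k") (auto simp: pochhammer_fact pochhammer_0_left)
qed

lemma higher_deriv_root_power_mult:
  assumes "[:-a, 1:] ^ k dvd q" "m < k" "g holomorphic_on UNIV"
  shows "(deriv ^^ m) (\<lambda>z. poly q z * g z) a = 0"
proof -
  obtain u where u: "q = [:-a, 1:] ^ k * u" using assms(1) by (auto elim: dvdE)
  have "(\<lambda>z. poly q z * g z) = (\<lambda>z. (z - a) ^ k * (poly u z * g z))"
    by (auto simp: u poly_mult mult.assoc)
  moreover have "(deriv ^^ m) (\<lambda>z. (z - a) ^ k * (poly u z * g z)) a =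
     (\<Sum>i = 0..m. of_nat (m choose i) * (deriv ^^ i) (\<lambda>z. (z - a) ^ k) a
        * (deriv ^^ (m - i)) (\<lambda>z. poly u z * g z) a)"
    by (rule higher_deriv_mult[where S = UNIV]) (auto intro!: holomorphic_intros assms(3))
  moreover have "\<dots> = 0"
    by (rule sum.neutral) (use assms(2) in \<open>auto simp: higher_deriv_linear_power_at\<close>)
  ultimately show ?thesis by simp
qed

lemma higher_deriv_root_power_mult_top:
  "(deriv ^^ k) (\<lambda>z. poly ([:-a, 1:] ^ k * u) z) (a::complex) = fact k * poly u a"
proof -
  have "(\<lambda>z. poly ([:-a, 1:] ^ k * u) z) = (\<lambda>z. (z - a) ^ k * poly u z)"
    by (auto simp: poly_mult)
  moreover have "(deriv ^^ k) (\<lambda>z. (z - a) ^ k * poly u z) a =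
     (\<Sum>i = 0..k. of_nat (k choose i) * (deriv ^^ i) (\<lambda>z. (z - a) ^ k) a * (deriv ^^ (k - i)) (poly u) a)"
    by (rule higher_deriv_mult[where S = UNIV]) (auto intro!: holomorphic_intros)
  moreover have "\<dots> = (\<Sum>i\<in>{k}. of_nat (k choose i) * (deriv ^^ i) (\<lambda>z. (z - a) ^ k) a
      * (deriv ^^ (k - i)) (poly u) a)"
    by (rule sum.mono_neutral_right) (auto simp: higher_deriv_linear_power_at)
  ultimately show ?thesis by (simp add: higher_deriv_linear_power_at)
qed

text \<open>Hermite interpolation: the witness polynomial has a root of order exactly \<open>m\<^sub>0\<close> at \<open>l\<^sub>0\<close>
  (the top derivative order of \<open>c\<close> there) and roots of higher order than any derivative
  of \<open>c\<close> at all other points of its support, so exactly one term of \<open>dapp c\<close> survives.\<close>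

lemma distr_eq_0_if_dapp_poly:
  assumes "finite_supp c" "\<And>P. dapp c (poly P) = 0"
  shows "c p = 0"
proof (rule ccontr)
  assume cp: "c p \<noteq> 0"
  let ?S = "{p. c p \<noteq> 0}"
  have finS: "finite ?S" using assms(1) unfolding finite_supp_def .
  define l0 where "l0 = fst p"
  have finM0: "finite {m. c (l0, m) \<noteq> 0}"
    by (rule finite_subset[of _ "snd ` ?S"]) (use finS in \<open>auto simp: image_iff\<close>)
  define m0 where "m0 = Max {m. c (l0, m) \<noteq> 0}"
  have "snd p \<in> {m. c (l0, m) \<noteq> 0}"
    using cp by (simp add: l0_def)
  then have inS: "(l0, m0) \<in> ?S"
    unfolding m0_def using Max_in[OF finM0] by blast
  have m0ge: "\<And>m. c (l0, m) \<noteq> 0 \<Longrightarrow> m \<le> m0"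
    unfolding m0_def using finM0 by auto
  define Mx where "Mx = Max (snd ` ?S)"
  define Lam where "Lam = fst ` ?S - {l0}"
  have finLam: "finite Lam" unfolding Lam_def using finS by auto
  define U where "U = (\<Prod>l\<in>Lam. [:-l, 1:] ^ (Suc Mx))"
  define P where "P = [:-l0, 1:] ^ m0 * U"
  have Ul0: "poly U l0 \<noteq> 0"
    unfolding U_def poly_prod using finLam by (auto simp: Lam_def)
  have "c q * (deriv ^^ snd q) (poly P) (fst q) = 0" if q: "q \<in> ?S" "q \<noteq> (l0, m0)" for q
  proof (cases "fst q = l0")
    case True
    then have "snd q < m0" using m0ge[of "snd q"] q by (cases q) auto
    then have "(deriv ^^ snd q) (\<lambda>z. poly P z * 1) l0 = 0"
      by (intro higher_deriv_root_power_mult) (auto simp: P_def)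
    then show ?thesis using True by simp
  next
    case False
    then have "fst q \<in> Lam" unfolding Lam_def using q by auto
    then have "[:-fst q, 1:] ^ Suc Mx dvd P"
      unfolding P_def U_def by (intro dvd_mult dvd_prodI[OF finLam])
    moreover have "snd q < Suc Mx"
      using finS q unfolding Mx_def by (intro le_imp_less_Suc Max_ge) auto
    ultimately have "(deriv ^^ snd q) (\<lambda>z. poly P z * 1) (fst q) = 0"
      by (intro higher_deriv_root_power_mult) auto
    then show ?thesis by simp
  qed
  then have "dapp c (poly P) = c (l0, m0) * (deriv ^^ m0) (poly P) l0"
    unfolding dapp_def sum.remove[OF finS inS] by (simp add: sum.neutral)
  also have "\<dots> = c (l0, m0) * (fact m0 * poly U l0)"
    unfolding P_def by (simp add: higher_deriv_root_power_mult_top)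
  finally show False
    using assms(2) inS Ul0 by simp
qed

lemma distr_eq_0_if_dapp_exp:
  assumes "finite_supp c" "\<And>x. dapp c (\<lambda>z. exp (x * z)) = 0"
  shows "c p = 0"
proof (rule distr_eq_0_if_dapp_poly[OF assms(1)])
  fix P
  have "dapp c (\<lambda>z. z ^ r) = 0" for r
    using higher_deriv_dapp_exp[OF assms(1), of r 0] assms(2) by (simp add: higher_deriv_const)
  then have "dapp c (\<lambda>z. \<Sum>i\<le>degree P. coeff P i * z ^ i) = 0"
    by (subst dapp_sum_fun) (auto intro!: holomorphic_intros)
  then show "dapp c (poly P) = 0"
    by (simp add: poly_altdef[abs_def])
qed

lemma dspan_mem:
  assumes "i < n"
  shows "cs i \<in> dspan n cs"
proof -
  have "(\<Sum>j<n. (if j = i then 1 else 0) * cs j p) = (\<Sum>j<n. if j = i then cs j p else 0)" for p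
    by (rule sum.cong) auto
  then have "cs i p = (\<Sum>j<n. (if j = i then 1 else 0) * cs j p)" for p
    using assms by simp
  then show ?thesis
    unfolding dspan_def by (intro CollectI exI[of _ "\<lambda>j. if j = i then 1 else 0"]) auto
qed

lemma dspan_support:
  assumes "c \<in> dspan n cs" "c p \<noteq> 0"
  shows "\<exists>j<n. cs j p \<noteq> 0"
  using assms unfolding dspan_def by (auto dest: sum_mult_nonzero_imp_nonzero)

lemma linear_power_dvd_qC:
  assumes fs: "\<forall>i<n. finite_supp (cs i)" and "i < n" and p: "cs i p \<noteq> 0"
  shows "[:-fst p, 1:] ^ Suc (snd p) dvd qC (dspan n cs)"
proof -
  let ?C = "dspan n cs"
  have finU: "finite (\<Union>j<n. {p. cs j p \<noteq> 0})"
    using fs unfolding finite_supp_def by auto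
  have "supp_points ?C \<subseteq> fst ` (\<Union>j<n. {p. cs j p \<noteq> 0})"
    unfolding supp_points_def by (force dest: dspan_support)
  then have finSP: "finite (supp_points ?C)"
    using finU finite_subset by blast
  have "{m. \<exists>c\<in>?C. c (fst p, m) \<noteq> 0} \<subseteq> snd ` (\<Union>j<n. {p. cs j p \<noteq> 0})"
    by (force dest: dspan_support)
  then have finM: "finite {m. \<exists>c\<in>?C. c (fst p, m) \<noteq> 0}"
    using finU finite_subset by blast
  have ci: "cs i \<in> ?C" by (rule dspan_mem[OF assms(2)])
  have "snd p \<le> max_order ?C (fst p)"
    unfolding max_order_def by (rule Max_ge[OF finM]) (use ci p in \<open>cases p, auto\<close>)
  then have "[:-fst p, 1:] ^ Suc (snd p) dvd [:-fst p, 1:] ^ (max_order ?C (fst p) + 1)"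
    by (intro le_imp_power_dvd) simp
  also have "\<dots> dvd qC ?C"
    unfolding qC_def by (rule dvd_prodI[OF finSP]) (use ci p in \<open>auto simp: supp_points_def intro!: exI[of _ "snd p"]\<close>)
  finally show ?thesis .
qed

lemma poly_diff_qC_cexp:
  assumes fs: "\<forall>i<n. finite_supp (cs i)" and i: "i < n"
  shows "poly_diff (qC (dspan n cs)) (cexp cs i) x = 0"
proof -
  have "poly_diff (qC (dspan n cs)) (cexp cs i) x
      = dapp (cs i) (\<lambda>z. poly (qC (dspan n cs)) z * exp (x * z))"
    unfolding cexp_def by (rule poly_diff_dapp_exp) (use fs i in simp)
  also have "\<dots> = 0"
    unfolding dapp_def
  proof (intro sum.neutral ballI)
    fix p assume "p \<in> {p. cs i p \<noteq> 0}"
    then have "(deriv ^^ snd p) (\<lambda>z. poly (qC (dspan n cs)) z * exp (x * z)) (fst p) = 0"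
      by (intro higher_deriv_root_power_mult[OF linear_power_dvd_qC[OF fs i]])
         (auto intro!: holomorphic_intros)
    then show "cs i p * (deriv ^^ snd p) (\<lambda>z. poly (qC (dspan n cs)) z * exp (x * z)) (fst p) = 0"
      by simp
  qed
  finally show ?thesis .
qed

lemma qC_nonzero: "qC C \<noteq> 0"
proof -
  have "[:-l, 1:] ^ (max_order C l + 1) \<noteq> (0::complex poly)" for l
    by (rule power_not_zero) simp
  then show ?thesis
    unfolding qC_def by (cases "finite (supp_points C)") (simp_all only: prod_zero_iff, auto)
qed

section \<open>Wronskians\<close>

definition wronsk_mat :: "nat \<Rightarrow> (nat \<Rightarrow> complex \<Rightarrow> complex) \<Rightarrow> complex \<Rightarrow> complex Matrix.mat" where
  "wronsk_mat k fs x = Matrix.mat k k (\<lambda>(i, j). (deriv ^^ i) (fs j) x)"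

lemma wronsk_mat_carrier: "wronsk_mat k fs x \<in> carrier_mat k k"
  unfolding wronsk_mat_def by simp

lemma det_mat_eq_sum_permutes:
  "Determinant.det (Matrix.mat k k (\<lambda>(i, j). M i j)) =
     (\<Sum>p | p permutes {..<k}. of_int (sign p) * (\<Prod>i<k. M i (p i)))"
proof -
  have "\<And>p i. p permutes {..<k} \<Longrightarrow> i < k \<Longrightarrow> p i < k"
    using permutes_in_image by fastforce
  then show ?thesis
    unfolding Determinant.det_def'[OF mat_carrier] atLeast0LessThan
    by (auto intro!: sum.cong prod.cong)
qed

lemma wronsk_eq_det: "wronsk k fs x = Determinant.det (wronsk_mat k fs x)"
  unfolding wronsk_def wronsk_mat_def det_mat_eq_sum_permutes ..

lemma wronsk_cong: "(\<And>j. j < k \<Longrightarrow> fs j = gs j) \<Longrightarrow> wronsk k fs x = wronsk k gs x"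
  unfolding wronsk_eq_det wronsk_mat_def by (intro arg_cong[where f = Determinant.det] eq_matI) auto

text \<open>The cofactors of the last column of the Wronskian matrix of \<open>w\<^sub>0, \<dots>, w\<^sub>k\<^sub>-\<^sub>1, f\<close>;
  they are the coefficients of the operator \<open>f \<mapsto> Wr(w\<^sub>0, \<dots>, w\<^sub>k\<^sub>-\<^sub>1, f)\<close>.\<close>

definition wronsk_cofactor :: "nat \<Rightarrow> (nat \<Rightarrow> complex \<Rightarrow> complex) \<Rightarrow> nat \<Rightarrow> complex \<Rightarrow> complex" where
  "wronsk_cofactor k w l x = (-1) ^ (l + k) *
     Determinant.det (Matrix.mat k k (\<lambda>(i, j). (deriv ^^ (if i < l then i else Suc i)) (w j) x))"

lemma wronsk_last_column:
  "wronsk (Suc k) (\<lambda>j. if j < k then w j else f) x = (\<Sum>l\<le>k. wronsk_cofactor k w l x * (deriv ^^ l) f x)"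
proof -
  let ?A = "wronsk_mat (Suc k) (\<lambda>j. if j < k then w j else f) x"
  have "wronsk (Suc k) (\<lambda>j. if j < k then w j else f) x = (\<Sum>i<Suc k. ?A $$ (i, k) * cofactor ?A i k)"
    unfolding wronsk_eq_det by (rule laplace_expansion_column[OF wronsk_mat_carrier]) simp
  also have "\<dots> = (\<Sum>l\<le>k. wronsk_cofactor k w l x * (deriv ^^ l) f x)"
    unfolding lessThan_Suc_atMost
  proof (rule sum.cong[OF refl])
    fix l assume l: "l \<in> {..k}"
    have "mat_delete ?A l k = Matrix.mat k k (\<lambda>(i, j). (deriv ^^ (if i < l then i else Suc i)) (w j) x)"
      by (rule eq_matI) (auto simp: mat_delete_def wronsk_mat_def)
    then show "?A $$ (l, k) * cofactor ?A l k = wronsk_cofactor k w l x * (deriv ^^ l) f x"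
      using l unfolding cofactor_def wronsk_cofactor_def by (simp add: wronsk_mat_def mult_ac)
  qed
  finally show ?thesis .
qed

lemma polyexp_wronsk_cofactor:
  assumes "\<And>j. j < k \<Longrightarrow> polyexp (w j)"
  shows "polyexp (wronsk_cofactor k w l)"
proof -
  have "\<And>p i. p permutes {..<k} \<Longrightarrow> i < k \<Longrightarrow> p i < k"
    using permutes_in_image by fastforce
  then show ?thesis
    unfolding wronsk_cofactor_def[abs_def] det_mat_eq_sum_permutes
    by (intro polyexp_intros finite_permutations assms) auto
qed

lemma wronsk_cofactor_top: "wronsk_cofactor k w k x = wronsk k w x"
proof -
  have "(-1::complex) ^ (k + k) = 1"
    by (simp add: power_add[symmetric] mult_2[symmetric] power_mult)
  moreover have "Matrix.mat k k (\<lambda>(i, j). (deriv ^^ (if i < k then i else Suc i)) (w j) x) = wronsk_mat k w x"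
    by (rule eq_matI) (auto simp: wronsk_mat_def)
  ultimately show ?thesis
    unfolding wronsk_cofactor_def wronsk_eq_det by simp
qed

lemma wronsk_repeated_column:
  assumes "j0 < k"
  shows "wronsk (Suc k) (\<lambda>j. if j < k then w j else w j0) x = 0"
proof -
  let ?A = "wronsk_mat (Suc k) (\<lambda>j. if j < k then w j else w j0) x"
  have "Matrix.col ?A j0 = Matrix.col ?A k"
    by (rule eq_vecI) (use assms in \<open>auto simp: wronsk_mat_def\<close>)
  then have "Determinant.det ?A = 0"
    using assms by (intro det_identical_columns[OF wronsk_mat_carrier, of j0 k]) auto
  then show ?thesis by (simp add: wronsk_eq_det)
qed

lemma wronsk_nonzero_imp_unique_solution:
  assumes "wronsk n w x \<noteq> 0" "\<And>i. i < n \<Longrightarrow> (\<Sum>l<n. r l * (deriv ^^ l) (w i) x) = 0" "l < n"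
  shows "r l = 0"
proof -
  let ?At = "transpose_mat (wronsk_mat n w x)"
  have At: "?At \<in> carrier_mat n n" using wronsk_mat_carrier by auto
  have dnz: "Determinant.det ?At \<noteq> 0"
    using assms(1) by (simp add: det_transpose[OF wronsk_mat_carrier] wronsk_eq_det)
  have "?At *\<^sub>v vec n r = 0\<^sub>v n"
  proof (rule eq_vecI)
    fix i assume "i < dim_vec (0\<^sub>v n :: complex vec)"
    then have i: "i < n" by simp
    have "(?At *\<^sub>v vec n r) $ i = (\<Sum>l\<in>{0..<n}. (deriv ^^ l) (w i) x * r l)"
      using i by (auto simp: wronsk_mat_def scalar_prod_def intro!: sum.cong)
    also have "\<dots> = 0" using assms(2)[OF i] by (simp add: atLeast0LessThan mult.commute)
    finally show "(?At *\<^sub>v vec n r) $ i = 0\<^sub>v n $ i" using i by simp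
  qed (simp add: wronsk_mat_def)
  then have "vec n r = 0\<^sub>v n"
    using det_0_iff_vec_prod_zero[OF At] dnz vec_carrier by blast
  then show ?thesis
    using assms(3) by (metis index_vec index_zero_vec(1))
qed

lemma exists_nontrivial_solution:
  fixes v :: "nat \<Rightarrow> nat \<Rightarrow> complex"
  shows "\<exists>c. (\<exists>i\<le>m. c i \<noteq> 0) \<and> (\<forall>l<m. (\<Sum>i\<le>m. c i * v i l) = 0)"
proof -
  let ?A = "Matrix.mat (Suc m) (Suc m) (\<lambda>(l, i). if l < m then v i l else 0)"
  have A: "?A \<in> carrier_mat (Suc m) (Suc m)" by simp
  have "Determinant.det ?A = (\<Sum>j<Suc m. ?A $$ (m, j) * cofactor ?A m j)"
    by (rule laplace_expansion_row[OF A]) simp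
  then have "Determinant.det ?A = 0" by simp
  then obtain u where u: "u \<in> carrier_vec (Suc m)" "u \<noteq> 0\<^sub>v (Suc m)" "?A *\<^sub>v u = 0\<^sub>v (Suc m)"
    using det_0_iff_vec_prod_zero[OF A] by blast
  have "\<exists>i\<le>m. u $ i \<noteq> 0"
    using u(1,2) by (metis (no_types, lifting) carrier_vecD eq_vecI index_zero_vec(1,2) less_Suc_eq_le)
  moreover have "(\<Sum>i\<le>m. u $ i * v i l) = 0" if l: "l < m" for l
  proof -
    have "(?A *\<^sub>v u) $ l = (\<Sum>i\<in>{0..<Suc m}. v i l * u $ i)"
      using l u(1) by (auto simp: scalar_prod_def intro!: sum.cong)
    then show ?thesis
      using u(3) l by (simp add: atLeast0LessThan lessThan_Suc_atMost mult.commute)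
  qed
  ultimately show ?thesis by blast
qed

section \<open>Linear ODEs and linear independence of the \<open>c\<^sub>i(e\<^sup>x\<^sup>z)\<close>\<close>

text \<open>Differentiating the equation \<open>p - m\<close> times, Leibniz' rule expresses \<open>a\<^sub>m(x\<^sub>0) g\<^sup>(\<^sup>p\<^sup>)(x\<^sub>0)\<close>
  through lower derivatives of \<open>g\<close> at \<open>x\<^sub>0\<close>, which vanish by induction.\<close>

lemma linear_ode_higher_deriv_eq_0:
  assumes a: "\<And>l. l \<le> m \<Longrightarrow> a l holomorphic_on UNIV" and am: "a m x0 \<noteq> 0"
    and g: "g holomorphic_on UNIV"
    and ode: "\<And>x. (\<Sum>l\<le>m. a l x * (deriv ^^ l) g x) = 0"
    and init: "\<And>l. l < m \<Longrightarrow> (deriv ^^ l) g x0 = 0"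
  shows "(deriv ^^ p) g x0 = 0"
proof (induction p rule: less_induct)
  case (less p)
  show ?case
  proof (cases "p < m")
    case False
    define r where "r = p - m"
    have summand: "of_nat (r choose s) * (deriv ^^ s) (a l) x0 * (deriv ^^ (r - s + l)) g x0
        = (if s = 0 then if l = m then a m x0 * (deriv ^^ p) g x0 else 0 else 0)"
      if "l \<le> m" "s \<le> r" for l s
    proof (cases "l = m \<and> s = 0")
      case False
      then have "r - s + l < p" using that \<open>\<not> p < m\<close> unfolding r_def by auto
      then show ?thesis using less.IH False by auto
    qed (use \<open>\<not> p < m\<close> r_def in auto)
    have "(\<lambda>x. \<Sum>l\<le>m. a l x * (deriv ^^ l) g x) = (\<lambda>x. 0)"
      using ode by auto
    then have "0 = (deriv ^^ r) (\<lambda>x. \<Sum>l\<le>m. a l x * (deriv ^^ l) g x) x0"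
      by (simp add: higher_deriv_const)
    also have "\<dots> = (\<Sum>l\<le>m. (deriv ^^ r) (\<lambda>x. a l x * (deriv ^^ l) g x) x0)"
      by (rule higher_deriv_sum[OF _ _ open_UNIV UNIV_I])
         (auto intro!: holomorphic_intros a holomorphic_higher_deriv g)
    also have "\<dots> = (\<Sum>l\<le>m. \<Sum>s = 0..r. of_nat (r choose s) * (deriv ^^ s) (a l) x0
        * (deriv ^^ (r - s + l)) g x0)"
    proof (rule sum.cong[OF refl])
      fix l assume "l \<in> {..m}"
      then show "(deriv ^^ r) (\<lambda>x. a l x * (deriv ^^ l) g x) x0 = (\<Sum>s = 0..r. of_nat (r choose s)
          * (deriv ^^ s) (a l) x0 * (deriv ^^ (r - s + l)) g x0)"
        using higher_deriv_mult[OF a holomorphic_higher_deriv[OF g open_UNIV] open_UNIV UNIV_I, of l r]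
        by (simp add: higher_deriv_higher_deriv)
    qed
    also have "\<dots> = (\<Sum>l\<le>m. \<Sum>s = 0..r. if s = 0 then if l = m then a m x0 * (deriv ^^ p) g x0 else 0 else 0)"
      by (intro sum.cong refl summand) auto
    also have "\<dots> = a m x0 * (deriv ^^ p) g x0"
      by simp
    finally show ?thesis using am by simp
  qed (use init in blast)
qed

lemma linear_ode_unique:
  assumes "\<And>l. l \<le> m \<Longrightarrow> a l holomorphic_on UNIV" "a m x0 \<noteq> 0" "g holomorphic_on UNIV"
    "\<And>x. (\<Sum>l\<le>m. a l x * (deriv ^^ l) g x) = 0"
    "\<And>l. l < m \<Longrightarrow> (deriv ^^ l) g x0 = 0"
  shows "g x = 0"
proof -
  have "g holomorphic_on ball x0 (dist x0 x + 1)"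
    using assms(3) by (rule holomorphic_on_subset) simp
  then show ?thesis
    by (rule holomorphic_fun_eq_0_on_ball[where w = x])
       (auto intro: linear_ode_higher_deriv_eq_0[OF assms])
qed

text \<open>A nontrivial combination of the \<open>m + 1\<close> solutions with vanishing initial values at \<open>x\<^sub>0\<close>
  exists by linear algebra; it vanishes identically by uniqueness.\<close>

lemma linear_ode_solutions_dependent:
  assumes a: "\<And>l. l \<le> m \<Longrightarrow> a l holomorphic_on UNIV" and am: "a m x0 \<noteq> 0"
    and g: "\<And>i. i \<le> m \<Longrightarrow> g i holomorphic_on UNIV"
    and ode: "\<And>i x. i \<le> m \<Longrightarrow> (\<Sum>l\<le>m. a l x * (deriv ^^ l) (g i) x) = 0"
  shows "\<exists>c. (\<exists>i\<le>m. c i \<noteq> 0) \<and> (\<forall>x. (\<Sum>i\<le>m. c i * g i x) = 0)"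
proof -
  obtain c where c: "\<exists>i\<le>m. c i \<noteq> 0" "\<forall>l<m. (\<Sum>i\<le>m. c i * (deriv ^^ l) (g i) x0) = 0"
    using exists_nontrivial_solution[of m "\<lambda>i l. (deriv ^^ l) (g i) x0"] by blast
  let ?G = "\<lambda>x. \<Sum>i\<le>m. c i * g i x"
  have dG: "(deriv ^^ l) ?G x = (\<Sum>i\<le>m. c i * (deriv ^^ l) (g i) x)" for l x
    by (rule higher_deriv_sum_cmult[where S = UNIV]) (auto intro: g)
  have ode_G: "(\<Sum>l\<le>m. a l x * (deriv ^^ l) ?G x) = 0" for x
  proof -
    have "(\<Sum>l\<le>m. a l x * (deriv ^^ l) ?G x) = (\<Sum>l\<le>m. \<Sum>i\<le>m. c i * (a l x * (deriv ^^ l) (g i) x))"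
      unfolding dG by (simp add: sum_distrib_left mult_ac)
    also have "\<dots> = (\<Sum>i\<le>m. c i * (\<Sum>l\<le>m. a l x * (deriv ^^ l) (g i) x))"
      by (subst sum.swap) (simp add: sum_distrib_left)
    also have "\<dots> = 0"
      using ode by simp
    finally show ?thesis .
  qed
  have "?G x = 0" for x
  proof (rule linear_ode_unique[OF a am _ ode_G])
    show "?G holomorphic_on UNIV"
      by (intro holomorphic_on_sum holomorphic_on_mult holomorphic_on_const g) simp
    show "(deriv ^^ l) ?G x0 = 0" if "l < m" for l
      using c(2) that by (simp add: dG)
  qed
  then show ?thesis using c(1) by blast
qed

lemma holomorphic_wronsk_cofactor:
  assumes "\<And>j. j < k \<Longrightarrow> w j holomorphic_on UNIV"
  shows "wronsk_cofactor k w l holomorphic_on UNIV"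
proof -
  have "\<And>p i. p permutes {..<k} \<Longrightarrow> i < k \<Longrightarrow> p i < k"
    using permutes_in_image by fastforce
  then show ?thesis
    unfolding wronsk_cofactor_def[abs_def] det_mat_eq_sum_permutes
    by (intro holomorphic_intros assms) auto
qed

lemma wronsk_eq_0_imp_dependent:
  assumes w: "\<And>j. j \<le> k \<Longrightarrow> w j holomorphic_on UNIV"
    and x0: "wronsk k w x0 \<noteq> 0" and W0: "\<And>x. wronsk (Suc k) w x = 0"
  shows "\<exists>c. (\<exists>i\<le>k. c i \<noteq> 0) \<and> (\<forall>x. (\<Sum>i\<le>k. c i * w i x) = 0)"
proof (rule linear_ode_solutions_dependent[of k "wronsk_cofactor k w" x0])
  show "wronsk_cofactor k w l holomorphic_on UNIV" for l
    by (rule holomorphic_wronsk_cofactor) (use w in auto)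
  show "wronsk_cofactor k w k x0 \<noteq> 0"
    using x0 by (simp add: wronsk_cofactor_top)
  show "w i holomorphic_on UNIV" if "i \<le> k" for i
    using w that .
  fix i x assume i: "i \<le> k"
  have "(\<Sum>l\<le>k. wronsk_cofactor k w l x * (deriv ^^ l) (w i) x)
      = wronsk (Suc k) (\<lambda>j. if j < k then w j else w i) x"
    by (rule wronsk_last_column[symmetric])
  also have "\<dots> = 0"
  proof (cases "i < k")
    case False
    then have "wronsk (Suc k) (\<lambda>j. if j < k then w j else w i) x = wronsk (Suc k) w x"
      using i by (intro wronsk_cong) (auto simp: less_Suc_eq)
    then show ?thesis using W0 by simp
  qed (rule wronsk_repeated_column)
  finally show "(\<Sum>l\<le>k. wronsk_cofactor k w l x * (deriv ^^ l) (w i) x) = 0" .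
qed

lemma cexp_lin_indep:
  assumes fs: "\<forall>i<n. finite_supp (cs i)" and indep: "dlin_indep n cs" and "k < n"
    and comb: "\<And>x. (\<Sum>i\<le>k. c i * cexp cs i x) = 0" and "i \<le> k"
  shows "c i = 0"
proof -
  let ?a = "\<lambda>i. if i \<le> k then c i else 0"
  have fsk: "\<And>i. i \<in> {..k} \<Longrightarrow> finite_supp (cs i)"
    using fs \<open>k < n\<close> by auto
  have "(\<Sum>i\<le>k. c i * cs i p) = 0" for p
  proof (rule distr_eq_0_if_dapp_exp)
    show "finite_supp (\<lambda>p. \<Sum>i\<le>k. c i * cs i p)"
      by (rule finite_supp_sum) (use fsk in auto)
    show "dapp (\<lambda>p. \<Sum>i\<le>k. c i * cs i p) (\<lambda>z. exp (x * z)) = 0" for x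
    proof -
      have "dapp (\<lambda>p. \<Sum>i\<le>k. c i * cs i p) (\<lambda>z. exp (x * z))
          = (\<Sum>i\<le>k. c i * dapp (cs i) (\<lambda>z. exp (x * z)))"
        by (rule dapp_sum_distr) (use fsk in auto)
      then show ?thesis
        using comb[of x] unfolding cexp_def by simp
    qed
  qed
  moreover have "(\<Sum>i<n. ?a i * cs i p) = (\<Sum>i\<le>k. ?a i * cs i p)" for p
    by (rule sum.mono_neutral_right) (use \<open>k < n\<close> in auto)
  ultimately have "\<forall>i<n. ?a i = 0"
    using indep unfolding dlin_indep_def by (elim allE[of _ ?a]) simp
  then have "?a i = 0"
    using \<open>i \<le> k\<close> \<open>k < n\<close> le_less_trans by blast
  then show ?thesis
    using \<open>i \<le> k\<close> by simp
qed

lemma tauC_nonzero: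
  assumes fs: "\<forall>i<n. finite_supp (cs i)" and indep: "dlin_indep n cs"
  shows "\<exists>x. tauC n cs x \<noteq> 0"
proof -
  have "\<exists>x. wronsk k (cexp cs) x \<noteq> 0" if "k \<le> n" for k
    using that
  proof (induction k)
    case 0
    then show ?case by (simp add: wronsk_def)
  next
    case (Suc k)
    then obtain x0 where x0: "wronsk k (cexp cs) x0 \<noteq> 0" by auto
    show ?case
    proof (rule ccontr)
      assume "\<nexists>x. wronsk (Suc k) (cexp cs) x \<noteq> 0"
      then obtain c where "\<exists>i\<le>k. c i \<noteq> 0" "\<forall>x. (\<Sum>i\<le>k. c i * cexp cs i x) = 0"
        using wronsk_eq_0_imp_dependent[OF _ x0] Suc.prems fs
        by (metis Suc_le_lessD le_less_trans polyexp_cexp polyexp_holomorphic)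
      then show False
        using cexp_lin_indep[OF fs indep] Suc.prems by (metis Suc_le_lessD)
    qed
  qed
  then show ?thesis unfolding tauC_def by simp
qed

section \<open>The operator \<open>K\<^sub>C\<close>\<close>

definition Kbar_coeffs :: "nat \<Rightarrow> (nat \<Rightarrow> distr) \<Rightarrow> nat \<Rightarrow> complex \<Rightarrow> complex" where
  "Kbar_coeffs n cs j = (if j \<le> n then wronsk_cofactor n (cexp cs) j else (\<lambda>x. 0))"

lemma KbarC_eq_diffop: "KbarC n cs f x = diffop n (Kbar_coeffs n cs) f x"
  unfolding KbarC_def wronsk_last_column diffop_def Kbar_coeffs_def by simp

lemma polyexp_Kbar_coeffs: "\<forall>i<n. finite_supp (cs i) \<Longrightarrow> polyexp (Kbar_coeffs n cs j)"
  unfolding Kbar_coeffs_def by (auto intro: polyexp_wronsk_cofactor polyexp_cexp polyexp_zero)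

lemma order_le_Kbar_coeffs: "order_le n (Kbar_coeffs n cs)"
  unfolding order_le_def Kbar_coeffs_def by auto

lemma Kbar_coeffs_top: "Kbar_coeffs n cs n = tauC n cs"
  unfolding Kbar_coeffs_def tauC_def by (auto simp: wronsk_cofactor_top fun_eq_iff)

lemma polyexp_tauC: "\<forall>i<n. finite_supp (cs i) \<Longrightarrow> polyexp (tauC n cs)"
  using polyexp_Kbar_coeffs Kbar_coeffs_top by metis

lemma KbarC_cexp: "j < n \<Longrightarrow> KbarC n cs (cexp cs j) x = 0"
  unfolding KbarC_def by (rule wronsk_repeated_column)

lemma represents_Kbar_exists:
  assumes "\<forall>i<n. finite_supp (cs i)"
  shows "\<exists>Kb. represents_Kbar n cs Kb"
  using exists_peop_eq_diffop[of n "Kbar_coeffs n cs"] polyexp_Kbar_coeffs[OF assms]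
  unfolding represents_Kbar_def KbarC_eq_diffop by metis

section \<open>Factorization of \<open>q\<^sub>C(\<partial>)\<close> through \<open>K\<^sub>C\<close>\<close>

text \<open>\<open>\<partial>\<^sup>m\<^sup>-\<^sup>n \<circ> K\<close> has order \<open>m\<close> and leading coefficient \<open>\<tau>\<close>, so subtracting \<open>F\<^sub>m\<close> times it
  from \<open>\<tau> F\<close> cancels the top order.\<close>

lemma pseudo_division_step:
  assumes K: "\<And>j. polyexp (K j)" "order_le n K" "K n = \<tau>"
    and F: "\<And>j. polyexp (F j)" "order_le m F" and "n \<le> m"
  defines "F' \<equiv> \<lambda>j x. \<tau> x * F j x - F m x * (deriv_coeffs ^^ (m - n)) K j x"
  shows "polyexp (F' j)" and "order_le (m - 1) F'"
    and "g holomorphic_on UNIV \<Longrightarrow>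
      \<tau> x * diffop m F g x = diffop (m - 1) F' g x + F m x * (deriv ^^ (m - n)) (\<lambda>y. diffop n K g y) x"
proof -
  let ?G = "(deriv_coeffs ^^ (m - n)) K"
  have G: "?G m = \<tau>" "order_le m ?G"
    using iter_deriv_coeffs_top[OF K(2), of "m - n"] order_le_iter_deriv_coeffs[OF K(2), of "m - n"]
      K(3) \<open>n \<le> m\<close> by simp_all
  show "polyexp (F' j)"
    unfolding F'_def using K(1,3) by (intro polyexp_intros F polyexp_iter_deriv_coeffs) metis+
  show F'_order: "order_le (m - 1) F'"
    unfolding order_le_def
  proof (intro allI impI ext)
    fix j x assume "m - 1 < j"
    then consider "j = m" | "m < j" by linarith
    then show "F' j x = 0"
      using F(2) G unfolding F'_def order_le_def by cases auto
  qed
  assume g: "g holomorphic_on UNIV"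
  have "diffop (m - 1) F' g x = diffop m F' g x"
    by (rule diffop_order_le[OF F'_order, symmetric]) simp
  also have "\<dots> = \<tau> x * diffop m F g x - F m x * diffop m ?G g x"
    unfolding F'_def diffop_def by (simp add: algebra_simps sum_distrib_left sum_subtractf)
  also have "diffop m ?G g x = (deriv ^^ (m - n)) (\<lambda>y. diffop n K g y) x"
    using higher_deriv_diffop[OF polyexp_holomorphic[OF K(1)] K(2) g, of "m - n" x] \<open>n \<le> m\<close> by simp
  finally show "\<tau> x * diffop m F g x = diffop (m - 1) F' g x + F m x * (deriv ^^ (m - n)) (\<lambda>y. diffop n K g y) x"
    by simp
qed

lemma diffop_add_coeff:
  assumes "order_le m A" "m \<le> M" "k \<le> M"
  shows "diffop M (A(k := \<lambda>x. A k x + e x)) h x = diffop m A h x + e x * (deriv ^^ k) h x"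
proof -
  have "diffop M (A(k := \<lambda>x. A k x + e x)) h x
      = (\<Sum>j\<le>M. A j x * (deriv ^^ j) h x + (if j = k then e x * (deriv ^^ k) h x else 0))"
    unfolding diffop_def by (rule sum.cong) (auto simp: algebra_simps)
  also have "\<dots> = diffop M A h x + e x * (deriv ^^ k) h x"
    unfolding diffop_def sum.distrib using assms(3) by simp
  finally show ?thesis
    using diffop_order_le[OF assms(1,2)] by simp
qed

lemma diffop_pseudo_division:
  assumes K: "\<And>j. polyexp (K j)" "order_le n K" "K n = \<tau>" "n \<ge> 1"
    and F: "\<And>j. polyexp (F j)" "order_le m F"
  shows "\<exists>s A mA R. (\<forall>j. polyexp (A j)) \<and> order_le mA A \<and> order_le (n - 1) R \<and>
     (\<forall>g x. g holomorphic_on UNIV \<longrightarrow>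
        \<tau> x ^ s * diffop m F g x = diffop mA A (\<lambda>y. diffop n K g y) x + diffop (n - 1) R g x)"
  using F
proof (induction m arbitrary: F rule: less_induct)
  case (less m)
  show ?case
  proof (cases "m < n")
    case True
    then have "order_le (n - 1) F" "diffop m F g x = diffop (n - 1) F g x" for g x
      using less.prems(2) by (auto intro: order_le_mono diffop_order_le[symmetric])
    then show ?thesis
      by (intro exI[of _ 0] exI[of _ "\<lambda>j x. 0"] exI[of _ 0] exI[of _ F])
         (auto simp: order_le_def diffop_def polyexp_zero)
  next
    case False
    define F' where "F' = (\<lambda>j x. \<tau> x * F j x - F m x * (deriv_coeffs ^^ (m - n)) K j x)"
    have F': "\<And>j. polyexp (F' j)" "order_le (m - 1) F'"
      "\<And>g x. g holomorphic_on UNIV \<Longrightarrow>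
         \<tau> x * diffop m F g x = diffop (m - 1) F' g x + F m x * (deriv ^^ (m - n)) (\<lambda>y. diffop n K g y) x"
      using pseudo_division_step[OF K(1-3) less.prems(1,2)] False unfolding F'_def by auto
    obtain s A mA R where IH: "\<forall>j. polyexp (A j)" "order_le mA A" "order_le (n - 1) R"
      "\<forall>g x. g holomorphic_on UNIV \<longrightarrow>
         \<tau> x ^ s * diffop (m - 1) F' g x = diffop mA A (\<lambda>y. diffop n K g y) x + diffop (n - 1) R g x"
      using less.IH[of "m - 1" F'] F'(1,2) False K(4) by auto
    define A' where "A' = A(m - n := \<lambda>x. A (m - n) x + \<tau> x ^ s * F m x)"
    have "\<tau> x ^ Suc s * diffop m F g x
        = diffop (max mA (m - n)) A' (\<lambda>y. diffop n K g y) x + diffop (n - 1) R g x"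
      if g: "g holomorphic_on UNIV" for g x
    proof -
      let ?h = "\<lambda>y. diffop n K g y"
      have A'_eq: "diffop (max mA (m - n)) A' ?h x
          = diffop mA A ?h x + \<tau> x ^ s * F m x * (deriv ^^ (m - n)) ?h x"
        unfolding A'_def by (rule diffop_add_coeff[OF IH(2)]) simp_all
      have "\<tau> x ^ Suc s * diffop m F g x = \<tau> x ^ s * (diffop (m - 1) F' g x + F m x * (deriv ^^ (m - n)) ?h x)"
        using F'(3)[OF g, of x] by simp
      also have "\<dots> = diffop mA A ?h x + diffop (n - 1) R g x + \<tau> x ^ s * F m x * (deriv ^^ (m - n)) ?h x"
        using IH(4) g by (simp add: algebra_simps)
      finally show ?thesis
        using A'_eq by simp
    qed
    moreover have "\<forall>j. polyexp (A' j)"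
      using IH(1) K(1,3) less.prems(1) unfolding A'_def by (auto intro!: polyexp_intros)
    moreover have "order_le (max mA (m - n)) A'"
      using IH(2) unfolding order_le_def A'_def by auto
    ultimately show ?thesis
      using IH(3) by blast
  qed
qed

lemma higher_deriv_power_factor:
  assumes "polyexp t" "r \<le> M"
  shows "\<exists>\<rho>. polyexp \<rho> \<and> (\<forall>x. (deriv ^^ r) (\<lambda>x. t x ^ M) x = t x ^ (M - r) * \<rho> x)"
  using assms(2)
proof (induction r)
  case 0
  show ?case by (intro exI[of _ "\<lambda>x. 1"]) (auto intro: polyexp_const)
next
  case (Suc r)
  then obtain \<rho> where \<rho>: "polyexp \<rho>" "\<And>x. (deriv ^^ r) (\<lambda>x. t x ^ M) x = t x ^ (M - r) * \<rho> x"
    by auto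
  define k where "k = M - r"
  have k: "k = Suc (M - Suc r)" using Suc.prems unfolding k_def by simp
  define \<rho>' where "\<rho>' x = of_nat k * deriv t x * \<rho> x + t x * deriv \<rho> x" for x
  have "polyexp \<rho>'"
    unfolding \<rho>'_def[abs_def] by (intro polyexp_intros assms(1) \<rho>(1))
  moreover have "(deriv ^^ Suc r) (\<lambda>x. t x ^ M) x = t x ^ (M - Suc r) * \<rho>' x" for x
  proof -
    have "(deriv ^^ r) (\<lambda>x. t x ^ M) = (\<lambda>x. t x ^ k * \<rho> x)"
      using \<rho>(2) unfolding k_def by auto
    then have "(deriv ^^ Suc r) (\<lambda>x. t x ^ M) x = deriv (\<lambda>x. t x ^ k * \<rho> x) x"
      by simp
    also have "\<dots> = of_nat k * (deriv t x * t x ^ (k - Suc 0)) * \<rho> x + t x ^ k * deriv \<rho> x"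
      using polyexp_holomorphic[OF assms(1), of UNIV] polyexp_holomorphic[OF \<rho>(1), of UNIV]
      by (intro DERIV_imp_deriv) (auto intro!: derivative_eq_intros holomorphic_derivI)
    also have "\<dots> = t x ^ (M - Suc r) * \<rho>' x"
      unfolding \<rho>'_def k by (simp add: algebra_simps)
    finally show ?thesis .
  qed
  ultimately show ?case by blast
qed

lemma diffop_mult:
  assumes "f holomorphic_on S" "h holomorphic_on S" "open S" "x \<in> S"
  shows "diffop m A (\<lambda>y. f y * h y) x =
    diffop m (\<lambda>l x. \<Sum>j\<le>m. if l \<le> j then A j x * of_nat (j choose l) * (deriv ^^ (j - l)) f x else 0) h x"
proof -
  have "A j x * (deriv ^^ j) (\<lambda>y. f y * h y) x
      = (\<Sum>l\<le>m. (if l \<le> j then A j x * of_nat (j choose l) * (deriv ^^ (j - l)) f x else 0) * (deriv ^^ l) h x)"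
    if "j \<le> m" for j
  proof -
    have "(deriv ^^ j) (\<lambda>y. h y * f y) x
        = (\<Sum>l = 0..j. of_nat (j choose l) * (deriv ^^ l) h x * (deriv ^^ (j - l)) f x)"
      by (rule higher_deriv_mult[OF assms(2,1,3,4)])
    also have "\<dots> = (\<Sum>l\<le>m. if l \<le> j then of_nat (j choose l) * (deriv ^^ l) h x * (deriv ^^ (j - l)) f x else 0)"
      using that by (intro sum.mono_neutral_cong_left) auto
    finally have "A j x * (deriv ^^ j) (\<lambda>y. f y * h y) x = (\<Sum>l\<le>m. A j x *
        (if l \<le> j then of_nat (j choose l) * (deriv ^^ l) h x * (deriv ^^ (j - l)) f x else 0))"
      by (simp add: mult.commute sum_distrib_left)
    also have "\<dots> = (\<Sum>l\<le>m. (if l \<le> j then A j x * of_nat (j choose l) * (deriv ^^ (j - l)) f x else 0)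
        * (deriv ^^ l) h x)"
      by (intro sum.cong refl) (simp add: mult_ac)
    finally show ?thesis .
  qed
  then have "diffop m A (\<lambda>y. f y * h y) x = (\<Sum>j\<le>m. \<Sum>l\<le>m.
      (if l \<le> j then A j x * of_nat (j choose l) * (deriv ^^ (j - l)) f x else 0) * (deriv ^^ l) h x)"
    unfolding diffop_def by simp
  also have "\<dots> = (\<Sum>l\<le>m. \<Sum>j\<le>m.
      (if l \<le> j then A j x * of_nat (j choose l) * (deriv ^^ (j - l)) f x else 0) * (deriv ^^ l) h x)"
    by (rule sum.swap)
  finally show ?thesis
    unfolding diffop_def by (simp add: sum_distrib_right)
qed

text \<open>Both \<open>q\<^sub>C(\<partial>)\<close> and \<open>K\<^sub>C\<close> kill every \<open>c\<^sub>i(e\<^sup>x\<^sup>z)\<close>, hence so does the pseudo-remainder,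
  whose order is below \<open>n\<close>; where the Wronskian \<open>\<tau>\<^sub>C\<close> does not vanish this forces it to be zero.\<close>

lemma tauC_power_poly_diff_qC:
  assumes "n \<ge> 1" and fs: "\<forall>i<n. finite_supp (cs i)"
  shows "\<exists>s A mA. (\<forall>j. polyexp (A j)) \<and> order_le mA A \<and>
    (\<forall>g x. g holomorphic_on UNIV \<longrightarrow> tauC n cs x \<noteq> 0 \<longrightarrow>
       tauC n cs x ^ s * poly_diff (qC (dspan n cs)) g x = diffop mA A (KbarC n cs g) x)"
proof -
  let ?q = "qC (dspan n cs)"
  let ?F = "\<lambda>j (x::complex). coeff ?q j"
  have pd: "poly_diff ?q g x = diffop (degree ?q) ?F g x" for g x
    unfolding poly_diff_def diffop_def ..
  have "order_le (degree ?q) ?F"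
    unfolding order_le_def by (auto simp: coeff_eq_0)
  then obtain s A mA R where sAR: "\<forall>j. polyexp (A j)" "order_le mA A" "order_le (n - 1) R"
    "\<And>g x. g holomorphic_on UNIV \<Longrightarrow> tauC n cs x ^ s * diffop (degree ?q) ?F g x
       = diffop mA A (\<lambda>y. diffop n (Kbar_coeffs n cs) g y) x + diffop (n - 1) R g x"
    using diffop_pseudo_division[OF polyexp_Kbar_coeffs[OF fs] order_le_Kbar_coeffs Kbar_coeffs_top
        \<open>n \<ge> 1\<close> polyexp_const] by blast
  have R0: "R l x = 0" if "tauC n cs x \<noteq> 0" for l x
  proof (cases "l < n")
    case True
    show ?thesis
    proof (rule wronsk_nonzero_imp_unique_solution[of n "cexp cs" x "\<lambda>l. R l x" l])
      show "wronsk n (cexp cs) x \<noteq> 0" using that unfolding tauC_def .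
      fix i assume i: "i < n"
      have "cexp cs i holomorphic_on UNIV"
        using fs i by (intro polyexp_holomorphic polyexp_cexp) simp
      then have "diffop (n - 1) R (cexp cs i) x = 0"
        using sAR(4)[of "cexp cs i" x] poly_diff_qC_cexp[OF fs i, of x] KbarC_cexp[OF i]
        by (simp add: pd KbarC_eq_diffop[symmetric] diffop_zero_fun)
      moreover have "{..n - 1} = {..<n}" using \<open>n \<ge> 1\<close> by auto
      ultimately show "(\<Sum>l<n. R l x * (deriv ^^ l) (cexp cs i) x) = 0"
        unfolding diffop_def by simp
    qed (use True in simp)
  qed (use sAR(3) \<open>n \<ge> 1\<close> in \<open>auto simp: order_le_def\<close>)
  show ?thesis
    using sAR(1,2,4) R0 by (intro exI[of _ s] exI[of _ A] exI[of _ mA])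
      (simp add: pd diffop_def KbarC_eq_diffop[abs_def])
qed

text \<open>Every derivative of order \<open>\<le> m\<^sub>A\<close> of \<open>\<tau>\<^sup>M\<close> is divisible by \<open>\<tau>\<^sup>s\<close>, so by Leibniz
  \<open>A \<circ> \<tau>\<^sup>M = \<tau>\<^sup>s B\<close> for an operator \<open>B\<close> with polynomial-exponential coefficients.\<close>

lemma diffop_mult_power:
  assumes A: "\<forall>j. polyexp (A j)" and \<tau>: "polyexp \<tau>" and M: "mA + s < M"
  obtains B where "\<And>l. polyexp (B l)"
    "\<And>h S x. h holomorphic_on S \<Longrightarrow> open S \<Longrightarrow> x \<in> S \<Longrightarrow>
       \<tau> x ^ s * diffop mA B h x = diffop mA A (\<lambda>y. \<tau> y ^ M * h y) x"
proof -
  have "\<forall>r. \<exists>\<rho>. r \<le> M \<longrightarrow> polyexp \<rho> \<and> (\<forall>x. (deriv ^^ r) (\<lambda>x. \<tau> x ^ M) x = \<tau> x ^ (M - r) * \<rho> x)"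
    using higher_deriv_power_factor[OF \<tau>] by blast
  from choice[OF this] obtain \<rho> where \<rho>: "\<And>r. r \<le> M \<Longrightarrow> polyexp (\<rho> r)"
    "\<And>r x. r \<le> M \<Longrightarrow> (deriv ^^ r) (\<lambda>x. \<tau> x ^ M) x = \<tau> x ^ (M - r) * \<rho> r x"
    by blast
  define B where "B l x = (\<Sum>j\<le>mA. if l \<le> j then A j x * of_nat (j choose l)
    * (\<tau> x ^ (M - (j - l) - s) * \<rho> (j - l) x) else 0)" for l x
  have "polyexp (B l)" for l
    unfolding B_def[abs_def] using A \<rho>(1) M by (intro polyexp_intros \<tau> polyexp_zero) auto
  moreover have "\<tau> x ^ s * diffop mA B h x = diffop mA A (\<lambda>y. \<tau> y ^ M * h y) x"
    if h: "h holomorphic_on S" "open S" "x \<in> S" for h S x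
  proof -
    have coeff: "\<tau> x ^ s * B l x = (\<Sum>j\<le>mA. if l \<le> j then
        A j x * of_nat (j choose l) * (deriv ^^ (j - l)) (\<lambda>y. \<tau> y ^ M) x else 0)" for l
      unfolding B_def sum_distrib_left
    proof (intro sum.cong refl)
      fix j assume j: "j \<in> {..mA}"
      define r where "r = j - l"
      have "r \<le> M" "M - r = s + (M - r - s)"
        unfolding r_def using j M by auto
      then have D: "(deriv ^^ r) (\<lambda>y. \<tau> y ^ M) x = \<tau> x ^ s * (\<tau> x ^ (M - r - s) * \<rho> r x)"
        using \<rho>(2) by (metis power_add mult.assoc)
      show "\<tau> x ^ s * (if l \<le> j then A j x * of_nat (j choose l)
          * (\<tau> x ^ (M - (j - l) - s) * \<rho> (j - l) x) else 0)
        = (if l \<le> j then A j x * of_nat (j choose l) * (deriv ^^ (j - l)) (\<lambda>y. \<tau> y ^ M) x else 0)"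
        unfolding r_def[symmetric] D by (simp add: mult_ac)
    qed
    have "\<tau> x ^ s * diffop mA B h x = diffop mA (\<lambda>l x. \<Sum>j\<le>mA. if l \<le> j then
        A j x * of_nat (j choose l) * (deriv ^^ (j - l)) (\<lambda>y. \<tau> y ^ M) x else 0) h x"
      unfolding diffop_def by (simp add: coeff[symmetric] sum_distrib_left mult.assoc)
    also have "\<dots> = diffop mA A (\<lambda>y. \<tau> y ^ M * h y) x"
      using polyexp_holomorphic[OF \<tau>] h by (intro diffop_mult[symmetric]) (auto intro: holomorphic_intros)
    finally show ?thesis .
  qed
  ultimately show ?thesis using that by blast
qed

lemma factorization_exists:
  assumes "n \<ge> 1" and fs: "\<forall>i<n. finite_supp (cs i)" and indep: "dlin_indep n cs"
  shows "\<exists>Q pp. factorization n cs Q pp"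
proof -
  let ?q = "qC (dspan n cs)"
  let ?\<tau> = "tauC n cs"
  obtain s A mA where A: "\<forall>j. polyexp (A j)" "order_le mA A"
    "\<And>g x. g holomorphic_on UNIV \<Longrightarrow> ?\<tau> x \<noteq> 0 \<Longrightarrow> ?\<tau> x ^ s * poly_diff ?q g x = diffop mA A (KbarC n cs g) x"
    using tauC_power_poly_diff_qC[OF assms(1,2)] by blast
  have \<tau>: "polyexp ?\<tau>" by (rule polyexp_tauC[OF fs])
  define M where "M = mA + s + 1"
  then have "mA + s < M" by simp
  then obtain B where B: "\<And>l. polyexp (B l)"
    "\<And>h S x. h holomorphic_on S \<Longrightarrow> open S \<Longrightarrow> x \<in> S \<Longrightarrow>
       ?\<tau> x ^ s * diffop mA B h x = diffop mA A (\<lambda>y. ?\<tau> y ^ M * h y) x"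
    using diffop_mult_power[OF A(1) \<tau>] by blast
  obtain Q where Q: "finite_supp Q" "\<And>f x. peop_apply Q f x = diffop mA B f x"
    using exists_peop_eq_diffop[of mA B] B(1) by blast
  obtain pp where pp: "finite_supp pp" "pe_fun pp = (\<lambda>x. ?\<tau> x ^ M)"
    using polyexp_power[OF \<tau>, of M] unfolding polyexp_def by auto
  have "poly_diff ?q f x = peop_apply Q (\<lambda>y. KbarC n cs f y / pe_fun pp y) x"
    if f: "f holomorphic_on UNIV" and x: "pe_fun pp x \<noteq> 0" for f x
  proof -
    let ?S = "{y. ?\<tau> y \<noteq> 0}"
    let ?h = "\<lambda>y. KbarC n cs f y / ?\<tau> y ^ M"
    have \<tau>x: "?\<tau> x \<noteq> 0" using x pp(2) M_def by auto
    have S: "open ?S" "x \<in> ?S"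
      by (rule open_Collect_neq[OF holomorphic_on_imp_continuous_on[OF polyexp_holomorphic[OF \<tau>]]
            continuous_on_const]) (use \<tau>x in simp)
    have Kf: "KbarC n cs f holomorphic_on UNIV"
      unfolding KbarC_eq_diffop[abs_def]
      using polyexp_holomorphic[OF polyexp_Kbar_coeffs[OF fs]] f by (rule diffop_holomorphic)
    have h: "?h holomorphic_on ?S"
      using polyexp_holomorphic[OF \<tau>]
      by (intro holomorphic_intros holomorphic_on_subset[OF Kf]) auto
    have "?\<tau> x ^ s * diffop mA B ?h x = diffop mA A (\<lambda>y. ?\<tau> y ^ M * ?h y) x"
      by (rule B(2)[OF h S])
    also have "\<dots> = diffop mA A (KbarC n cs f) x"
    proof (intro diffop_cong higher_deriv_transform_within_open[OF _ _ S])
      show "(\<lambda>y. ?\<tau> y ^ M * ?h y) holomorphic_on ?S"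
        by (rule holomorphic_on_mult[OF holomorphic_on_power[OF polyexp_holomorphic[OF \<tau>]] h])
      show "KbarC n cs f holomorphic_on ?S"
        by (rule holomorphic_on_subset[OF Kf]) simp
    qed simp
    also have "\<dots> = ?\<tau> x ^ s * poly_diff ?q f x"
      by (rule A(3)[OF f \<tau>x, symmetric])
    finally show ?thesis
      using \<tau>x Q(2) pp(2) by simp
  qed
  moreover have "pe_fun pp \<noteq> (\<lambda>x. 0)"
    using tauC_nonzero[OF fs indep] pp(2) by (metis power_not_zero)
  ultimately show ?thesis
    using Q(1) pp(1) unfolding factorization_def by blast
qed

section \<open>Rational functions\<close>

definition rational_fun :: "(complex \<Rightarrow> complex) \<Rightarrow> bool" where
  "rational_fun h \<longleftrightarrow> (\<exists>p c. c \<noteq> 0 \<and> (\<forall>z. poly c z \<noteq> 0 \<longrightarrow> h z = poly p z / poly c z))"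

lemma rational_fun_const: "rational_fun (\<lambda>z. a)"
  unfolding rational_fun_def by (intro exI[of _ "[:a:]"] exI[of _ 1]) simp

lemma rational_fun_poly: "rational_fun (poly p)"
  unfolding rational_fun_def by (intro exI[of _ p] exI[of _ 1]) simp

lemma rational_fun_mult:
  assumes "rational_fun f" "rational_fun g"
  shows "rational_fun (\<lambda>z. f z * g z)"
proof -
  obtain p1 c1 p2 c2 where "c1 \<noteq> 0" "\<forall>z. poly c1 z \<noteq> 0 \<longrightarrow> f z = poly p1 z / poly c1 z"
    "c2 \<noteq> 0" "\<forall>z. poly c2 z \<noteq> 0 \<longrightarrow> g z = poly p2 z / poly c2 z"
    using assms unfolding rational_fun_def by blast
  then show ?thesis
    unfolding rational_fun_def by (intro exI[of _ "p1 * p2"] exI[of _ "c1 * c2"]) (auto simp: poly_mult)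
qed

fun quot_deriv_numer :: "complex poly \<Rightarrow> nat \<Rightarrow> complex poly \<Rightarrow> complex poly" where
  "quot_deriv_numer q 0 p = p"
| "quot_deriv_numer q (Suc l) p = pderiv (quot_deriv_numer q l p) * q
     - Polynomial.smult (of_nat (Suc l)) (quot_deriv_numer q l p * pderiv q)"

lemma higher_deriv_poly_quotient:
  assumes "poly q w \<noteq> 0"
  shows "(deriv ^^ l) (\<lambda>u. poly p u / poly q u) w = poly (quot_deriv_numer q l p) w / poly q w ^ Suc l"
  using assms
proof (induction l arbitrary: w)
  case (Suc l)
  let ?N = "quot_deriv_numer q l p"
  have "eventually (\<lambda>u. u \<in> {u. poly q u \<noteq> 0}) (nhds w)"
    using Suc.prems by (intro eventually_nhds_in_open open_Collect_neq) (auto intro!: continuous_intros)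
  then have ev: "eventually (\<lambda>u. (deriv ^^ l) (\<lambda>u. poly p u / poly q u) u = poly ?N u / poly q u ^ Suc l) (nhds w)"
    by (rule eventually_mono) (use Suc.IH in blast)
  have "(deriv ^^ Suc l) (\<lambda>u. poly p u / poly q u) w = deriv (\<lambda>u. poly ?N u / poly q u ^ Suc l) w"
    using deriv_cong_ev[OF ev refl] by simp
  also have "\<dots> = (poly (pderiv ?N) w * poly q w ^ Suc l - poly ?N w
      * (of_nat (Suc l) * (poly (pderiv q) w * poly q w ^ (Suc l - Suc 0))))
      / (poly q w ^ Suc l * poly q w ^ Suc l)"
    by (rule DERIV_imp_deriv, rule DERIV_divide[OF poly_DERIV DERIV_power[OF poly_DERIV]])
       (use Suc.prems in simp)
  also have "\<dots> = poly (quot_deriv_numer q (Suc l) p) w / poly q w ^ Suc (Suc l)"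
    using Suc.prems by (simp add: poly_mult field_simps)
  finally show ?case .
qed simp

lemma rational_fun_higher_deriv_shift:
  assumes "q \<noteq> 0"
  shows "rational_fun (\<lambda>z. (deriv ^^ l) (\<lambda>u. poly p u / poly q u) (z + \<nu>))"
proof -
  let ?s = "[:\<nu>, 1:]"
  have "(pcompose q ?s) ^ Suc l \<noteq> 0"
    using assms pcompose_eq_0_iff[of ?s q] by simp
  moreover have "(deriv ^^ l) (\<lambda>u. poly p u / poly q u) (z + \<nu>)
      = poly (pcompose (quot_deriv_numer q l p) ?s) z / poly ((pcompose q ?s) ^ Suc l) z"
    if "poly ((pcompose q ?s) ^ Suc l) z \<noteq> 0" for z
    using that higher_deriv_poly_quotient[of q "z + \<nu>"] by (simp add: poly_pcompose add.commute)
  ultimately show ?thesis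
    unfolding rational_fun_def by blast
qed

lemma rational_fun_common_denominator:
  assumes "finite I" "\<And>a. a \<in> I \<Longrightarrow> rational_fun (h a)"
  shows "\<exists>c P. c \<noteq> 0 \<and> (\<forall>a\<in>I. \<forall>z. poly c z \<noteq> 0 \<longrightarrow> h a z = poly (P a) z / poly c z)"
  using assms
proof (induction I rule: finite_induct)
  case empty
  then show ?case by (intro exI[of _ 1]) simp
next
  case (insert a I)
  then obtain c P where cP: "c \<noteq> 0" "\<forall>b\<in>I. \<forall>z. poly c z \<noteq> 0 \<longrightarrow> h b z = poly (P b) z / poly c z"
    by auto
  obtain p1 c1 where pc1: "c1 \<noteq> 0" "\<forall>z. poly c1 z \<noteq> 0 \<longrightarrow> h a z = poly p1 z / poly c1 z"
    using insert.prems unfolding rational_fun_def by blast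
  let ?P = "\<lambda>b. if b = a then p1 * c else P b * c1"
  have "\<forall>b\<in>insert a I. \<forall>z. poly (c * c1) z \<noteq> 0 \<longrightarrow> h b z = poly (?P b) z / poly (c * c1) z"
    using cP(2) pc1(2) by (auto simp: poly_mult)
  then show ?case
    using cP(1) pc1(1) by (intro exI[of _ "c * c1"] exI[of _ ?P]) simp
qed

lemma poly_eq_0_cofinite:
  fixes p :: "complex poly"
  assumes "finite B" "\<And>z. z \<notin> B \<Longrightarrow> poly p z = 0"
  shows "p = 0"
proof (rule ccontr)
  assume "p \<noteq> 0"
  then have "UNIV \<subseteq> B \<union> {z. poly p z = 0}" "finite (B \<union> {z. poly p z = 0})"
    using assms poly_roots_finite by auto
  then show False
    using infinite_UNIV_char_0 finite_subset by blast
qed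

section \<open>The operators \<open>b(L)\<close>\<close>

lemma b_apply_eq_sum:
  "b_apply L F z = (\<Sum>t\<in>{t. L t \<noteq> 0}. L t * z ^ op_ord t * (deriv ^^ op_xpow t) F (z + op_exp t))"
  unfolding b_apply_def by (rule sum.cong) (auto simp: higher_deriv_shift split: prod.splits)

lemma peop_apply_eq_sum:
  "peop_apply L f x = (\<Sum>t\<in>{t. L t \<noteq> 0}. L t * x ^ op_xpow t * exp (op_exp t * x) * (deriv ^^ op_ord t) f x)"
  unfolding peop_apply_def by (rule sum.cong) (auto split: prod.splits)

definition peop_symbol :: "peop \<Rightarrow> complex \<Rightarrow> complex \<Rightarrow> complex" where
  "peop_symbol L x u = (\<Sum>t\<in>{t. L t \<noteq> 0}. L t * x ^ op_xpow t * exp (op_exp t * x) * u ^ op_ord t)"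

lemma peop_apply_exp: "peop_apply L (\<lambda>y. exp (y * u)) x = peop_symbol L x u * exp (x * u)"
  unfolding peop_apply_eq_sum peop_symbol_def higher_deriv_exp_linear'
  by (simp add: sum_distrib_left sum_distrib_right mult_ac)

lemma KbarC_exp:
  assumes "represents_Kbar n cs Kb"
  shows "KbarC n cs (\<lambda>y. exp (y * u)) x = peop_symbol Kb x u * exp (x * u)"
  using assms peop_apply_exp[of Kb u x]
  unfolding represents_Kbar_def by (simp add: holomorphic_intros)

lemma psiC_eq:
  assumes "represents_Kbar n cs Kb"
  shows "psiC n cs x u = peop_symbol Kb x u * exp (x * u) / tauC n cs x / u ^ n"
  unfolding psiC_def KC_def KbarC_exp[OF assms] ..

definition regular_point :: "peop \<Rightarrow> complex poly \<Rightarrow> complex \<Rightarrow> bool" where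
  "regular_point Q q z \<longleftrightarrow> (\<forall>t. Q t \<noteq> 0 \<longrightarrow> poly q (z + op_exp t) \<noteq> 0)"

lemma finite_irregular_points:
  assumes "finite_supp Q" "q \<noteq> 0"
  shows "finite {z. \<not> regular_point Q q z}"
proof (rule finite_subset)
  show "{z. \<not> regular_point Q q z} \<subseteq> (\<Union>t\<in>{t. Q t \<noteq> 0}. (\<lambda>r. r - op_exp t) ` {r. poly q r = 0})"
    unfolding regular_point_def by (force intro: image_eqI)
  show "finite (\<Union>t\<in>{t. Q t \<noteq> 0}. (\<lambda>r. r - op_exp t) ` {r. poly q r = 0})"
    using assms poly_roots_finite unfolding finite_supp_def by blast
qed

lemma open_poly_nonzero: "open {u. poly q u \<noteq> (0::complex)}"
  by (rule open_Collect_neq) (auto intro!: continuous_intros)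

lemma regular_point_in_open:
  "regular_point Q q z \<Longrightarrow> Q t \<noteq> 0 \<Longrightarrow> z + op_exp t \<in> {u. poly q u \<noteq> 0}"
  unfolding regular_point_def by blast

text \<open>The value at \<open>z\<close> of \<open>b(Q)[e\<^sup>x\<^sup>w / q(w)]\<close> and of \<open>b(Q)[K\<^sub>C[e\<^sup>x\<^sup>w] / q(w)]\<close> (lemma
  \<open>b_apply_Kbar_exp_div\<close>), written so that they are visibly entire in \<open>x\<close>.\<close>

definition bQ_exp :: "peop \<Rightarrow> complex poly \<Rightarrow> complex \<Rightarrow> complex \<Rightarrow> complex" where
  "bQ_exp Q q z x = (\<Sum>t\<in>{t. Q t \<noteq> 0}. Q t * z ^ op_ord t
     * exp_leibniz (op_xpow t) (\<lambda>u. 1 / poly q u) x (z + op_exp t))"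

definition bQ_Kbar_exp :: "peop \<Rightarrow> peop \<Rightarrow> complex poly \<Rightarrow> complex \<Rightarrow> complex \<Rightarrow> complex" where
  "bQ_Kbar_exp Q Kb q x z = (\<Sum>t\<in>{t. Q t \<noteq> 0}. Q t * z ^ op_ord t *
     (\<Sum>t'\<in>{t. Kb t \<noteq> 0}. Kb t' * x ^ op_xpow t' * exp (op_exp t' * x)
        * exp_leibniz (op_xpow t) (\<lambda>u. u ^ op_ord t' / poly q u) x (z + op_exp t)))"

lemma b_apply_Kbar_exp_div:
  assumes "finite_supp Kb" "regular_point Q q z"
  shows "b_apply Q (\<lambda>u. peop_symbol Kb x u * exp (x * u) / poly q u) z = bQ_Kbar_exp Q Kb q x z"
  unfolding b_apply_eq_sum bQ_Kbar_exp_def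
proof (intro sum.cong refl arg_cong2[where f = "(*)"])
  fix t assume "t \<in> {t. Q t \<noteq> 0}"
  then have S: "open {u. poly q u \<noteq> 0}" "z + op_exp t \<in> {u. poly q u \<noteq> 0}"
    using open_poly_nonzero regular_point_in_open[OF assms(2)] by auto
  let ?c = "\<lambda>t'. Kb t' * x ^ op_xpow t' * exp (op_exp t' * x)"
  let ?\<rho> = "\<lambda>u. \<Sum>t'\<in>{t. Kb t \<noteq> 0}. ?c t' * (u ^ op_ord t' / poly q u)"
  have "(\<lambda>u. peop_symbol Kb x u * exp (x * u) / poly q u) = (\<lambda>u. exp (x * u) * ?\<rho> u)"
    unfolding peop_symbol_def
    by (auto simp: sum_divide_distrib sum_distrib_left sum_distrib_right mult_ac fun_eq_iff)
  moreover have "?\<rho> holomorphic_on {u. poly q u \<noteq> 0}"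
    by (auto intro!: holomorphic_intros)
  ultimately have "(deriv ^^ op_xpow t) (\<lambda>u. peop_symbol Kb x u * exp (x * u) / poly q u) (z + op_exp t)
      = exp_leibniz (op_xpow t) ?\<rho> x (z + op_exp t)"
    using higher_deriv_exp_mult[OF _ S] by simp
  also have "\<dots> = (\<Sum>t'\<in>{t. Kb t \<noteq> 0}. ?c t' * exp_leibniz (op_xpow t) (\<lambda>u. u ^ op_ord t' / poly q u) x (z + op_exp t))"
    using assms(1) unfolding finite_supp_def
    by (intro exp_leibniz_sum[OF _ _ S]) (auto intro!: holomorphic_intros)
  finally show "(deriv ^^ op_xpow t) (\<lambda>u. peop_symbol Kb x u * exp (x * u) / poly q u) (z + op_exp t)
      = (\<Sum>t'\<in>{t. Kb t \<noteq> 0}. ?c t' * exp_leibniz (op_xpow t) (\<lambda>u. u ^ op_ord t' / poly q u) x (z + op_exp t))" .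
qed

lemma holomorphic_bQ_exp: "bQ_exp Q q z holomorphic_on UNIV"
  unfolding bQ_exp_def[abs_def] by (intro holomorphic_intros exp_leibniz_holomorphic)

lemma holomorphic_bQ_Kbar_exp: "(\<lambda>x. bQ_Kbar_exp Q Kb q x z) holomorphic_on UNIV"
  unfolding bQ_Kbar_exp_def by (intro holomorphic_intros exp_leibniz_holomorphic)

lemma higher_deriv_bQ_exp:
  assumes "finite_supp Q" "regular_point Q q z"
  shows "(deriv ^^ i) (bQ_exp Q q z) x = (\<Sum>t\<in>{t. Q t \<noteq> 0}. Q t * z ^ op_ord t
     * exp_leibniz (op_xpow t) (\<lambda>u. u ^ i / poly q u) x (z + op_exp t))"
proof -
  have "(deriv ^^ i) (bQ_exp Q q z) x = (\<Sum>t\<in>{t. Q t \<noteq> 0}. Q t * z ^ op_ord t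
      * (deriv ^^ i) (\<lambda>x. exp_leibniz (op_xpow t) (\<lambda>u. 1 / poly q u) x (z + op_exp t)) x)"
    unfolding bQ_exp_def[abs_def] using assms(1)
    by (intro higher_deriv_sum_cmult[where S = UNIV] exp_leibniz_holomorphic)
       (auto simp: finite_supp_def)
  also have "\<dots> = (\<Sum>t\<in>{t. Q t \<noteq> 0}. Q t * z ^ op_ord t
      * exp_leibniz (op_xpow t) (\<lambda>u. u ^ i / poly q u) x (z + op_exp t))"
  proof (intro sum.cong refl arg_cong2[where f = "(*)"])
    fix t assume "t \<in> {t. Q t \<noteq> 0}"
    moreover have "(\<lambda>u. 1 / poly q u) holomorphic_on {u. poly q u \<noteq> 0}"
      by (auto intro!: holomorphic_intros)
    ultimately show "(deriv ^^ i) (\<lambda>x. exp_leibniz (op_xpow t) (\<lambda>u. 1 / poly q u) x (z + op_exp t)) x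
        = exp_leibniz (op_xpow t) (\<lambda>u. u ^ i / poly q u) x (z + op_exp t)"
      using higher_deriv_exp_leibniz[OF _ open_poly_nonzero regular_point_in_open[OF assms(2)]] by simp
  qed
  finally show ?thesis .
qed

lemma peop_apply_bQ_exp:
  assumes "finite_supp Q" "finite_supp Kb" "regular_point Q q z"
  shows "peop_apply Kb (bQ_exp Q q z) x = bQ_Kbar_exp Q Kb q x z"
proof -
  have "peop_apply Kb (bQ_exp Q q z) x = (\<Sum>t'\<in>{t. Kb t \<noteq> 0}. \<Sum>t\<in>{t. Q t \<noteq> 0}.
      Q t * z ^ op_ord t * (Kb t' * x ^ op_xpow t' * exp (op_exp t' * x)
      * exp_leibniz (op_xpow t) (\<lambda>u. u ^ op_ord t' / poly q u) x (z + op_exp t)))"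
    unfolding peop_apply_eq_sum higher_deriv_bQ_exp[OF assms(1,3)]
    by (simp add: sum_distrib_left mult_ac)
  also have "\<dots> = bQ_Kbar_exp Q Kb q x z"
    unfolding bQ_Kbar_exp_def by (subst sum.swap) (simp add: sum_distrib_left)
  finally show ?thesis .
qed

lemma poly_diff_bQ_exp:
  assumes "finite_supp Q" "regular_point Q q z"
  shows "poly_diff q (bQ_exp Q q z) x = peop_apply Q (\<lambda>y. exp (y * z)) x"
proof -
  have "poly_diff q (bQ_exp Q q z) x = (\<Sum>t\<in>{t. Q t \<noteq> 0}. Q t * z ^ op_ord t *
      (\<Sum>i\<le>degree q. coeff q i * exp_leibniz (op_xpow t) (\<lambda>u. u ^ i / poly q u) x (z + op_exp t)))"
    unfolding poly_diff_def higher_deriv_bQ_exp[OF assms]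
    by (simp add: sum_distrib_left sum.swap[of _ "{..degree q}"] mult_ac)
  also have "\<dots> = (\<Sum>t\<in>{t. Q t \<noteq> 0}. Q t * z ^ op_ord t * (x ^ op_xpow t * exp (x * (z + op_exp t))))"
  proof (intro sum.cong refl arg_cong2[where f = "(*)"])
    fix t assume "t \<in> {t. Q t \<noteq> 0}"
    then have S: "open {u. poly q u \<noteq> 0}" "z + op_exp t \<in> {u. poly q u \<noteq> 0}"
      using open_poly_nonzero regular_point_in_open[OF assms(2)] by auto
    have "(\<Sum>i\<le>degree q. coeff q i * exp_leibniz (op_xpow t) (\<lambda>u. u ^ i / poly q u) x (z + op_exp t))
        = exp_leibniz (op_xpow t) (\<lambda>u. \<Sum>i\<le>degree q. coeff q i * (u ^ i / poly q u)) x (z + op_exp t)"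
      by (intro exp_leibniz_sum[symmetric, OF _ _ S]) (auto intro!: holomorphic_intros)
    also have "\<dots> = exp_leibniz (op_xpow t) (\<lambda>u. 1) x (z + op_exp t)"
    proof (rule exp_leibniz_cong[OF _ _ S])
      show "(\<lambda>u. \<Sum>i\<le>degree q. coeff q i * (u ^ i / poly q u)) holomorphic_on {u. poly q u \<noteq> 0}"
        by (auto intro!: holomorphic_intros)
      show "(\<Sum>i\<le>degree q. coeff q i * (w ^ i / poly q w)) = 1" if "w \<in> {u. poly q u \<noteq> 0}" for w
        using that by (simp add: poly_altdef sum_divide_distrib[symmetric])
    qed simp
    finally show "(\<Sum>i\<le>degree q. coeff q i * exp_leibniz (op_xpow t) (\<lambda>u. u ^ i / poly q u) x (z + op_exp t))
        = x ^ op_xpow t * exp (x * (z + op_exp t))"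
      by (simp add: exp_leibniz_one)
  qed
  also have "\<dots> = peop_apply Q (\<lambda>y. exp (y * z)) x"
    unfolding peop_apply_eq_sum higher_deriv_exp_linear'
    by (intro sum.cong refl) (simp add: exp_add distrib_left mult_ac)
  finally show ?thesis .
qed

text \<open>Separation of variables in \<open>bQ_Kbar_exp\<close>: after removing \<open>e\<^sup>x\<^sup>z\<close> it is a finite sum of
  products of a polynomial-exponential function of \<open>x\<close> and a rational function of \<open>z\<close>.\<close>

definition sep_index :: "peop \<Rightarrow> peop \<Rightarrow> ((nat \<times> complex \<times> nat) \<times> (nat \<times> complex \<times> nat) \<times> nat) set" where
  "sep_index Q Kb = Sigma {t. Q t \<noteq> 0} (\<lambda>t. {t. Kb t \<noteq> 0} \<times> {..op_xpow t})"

definition sep_x :: "peop \<Rightarrow> (nat \<times> complex \<times> nat) \<times> (nat \<times> complex \<times> nat) \<times> nat \<Rightarrow> complex \<Rightarrow> complex" where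
  "sep_x Kb a x = (case a of (t, t', i) \<Rightarrow>
     Kb t' * x ^ op_xpow t' * exp (op_exp t' * x) * exp (op_exp t * x) * x ^ i)"

definition sep_z :: "peop \<Rightarrow> complex poly \<Rightarrow> (nat \<times> complex \<times> nat) \<times> (nat \<times> complex \<times> nat) \<times> nat
    \<Rightarrow> complex \<Rightarrow> complex" where
  "sep_z Q q a z = (case a of (t, t', i) \<Rightarrow> Q t * z ^ op_ord t * of_nat (op_xpow t choose i)
     * (deriv ^^ (op_xpow t - i)) (\<lambda>u. u ^ op_ord t' / poly q u) (z + op_exp t))"

lemma finite_sep_index: "finite_supp Q \<Longrightarrow> finite_supp Kb \<Longrightarrow> finite (sep_index Q Kb)"
  unfolding sep_index_def finite_supp_def by auto

lemma polyexp_sep_x: "polyexp (sep_x Kb a)"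
  unfolding sep_x_def[abs_def] by (cases a) (auto intro!: polyexp_intros)

lemma rational_fun_sep_z: "q \<noteq> 0 \<Longrightarrow> rational_fun (sep_z Q q a)"
proof -
  assume "q \<noteq> 0"
  obtain t t' i where a: "a = (t, t', i)" by (cases a)
  have "(\<lambda>u. u ^ op_ord t' / poly q u) = (\<lambda>u. poly (monom 1 (op_ord t')) u / poly q u)"
    by (simp add: poly_monom)
  then have "sep_z Q q a = (\<lambda>z. (\<lambda>z. Q t * of_nat (op_xpow t choose i)) z * (poly (monom 1 (op_ord t)) z
      * (deriv ^^ (op_xpow t - i)) (\<lambda>u. poly (monom 1 (op_ord t')) u / poly q u) (z + op_exp t)))"
    unfolding sep_z_def a by (auto simp: poly_monom mult_ac)
  then show ?thesis
    using \<open>q \<noteq> 0\<close> by (simp only:) (intro rational_fun_mult rational_fun_const rational_fun_poly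
        rational_fun_higher_deriv_shift)
qed

lemma bQ_Kbar_exp_separated:
  assumes "finite_supp Q" "finite_supp Kb"
  shows "bQ_Kbar_exp Q Kb q x z = exp (x * z) * (\<Sum>a\<in>sep_index Q Kb. sep_x Kb a x * sep_z Q q a z)"
proof -
  let ?F = "\<lambda>a. sep_x Kb a x * sep_z Q q a z"
  have "Q t * z ^ op_ord t * (Kb t' * x ^ op_xpow t' * exp (op_exp t' * x)
      * exp_leibniz (op_xpow t) (\<lambda>u. u ^ op_ord t' / poly q u) x (z + op_exp t))
    = exp (x * z) * (\<Sum>i\<le>op_xpow t. sep_x Kb (t, t', i) x * sep_z Q q (t, t', i) z)" for t t'
    unfolding exp_leibniz_def sep_x_def sep_z_def atLeast0AtMost
    by (simp add: sum_distrib_left distrib_left exp_add mult_ac)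
  then have "bQ_Kbar_exp Q Kb q x z
      = exp (x * z) * (\<Sum>t\<in>{t. Q t \<noteq> 0}. \<Sum>t'\<in>{t. Kb t \<noteq> 0}. \<Sum>i\<le>op_xpow t. ?F (t, t', i))"
    unfolding bQ_Kbar_exp_def by (simp add: sum_distrib_left)
  also have "(\<Sum>t\<in>{t. Q t \<noteq> 0}. \<Sum>t'\<in>{t. Kb t \<noteq> 0}. \<Sum>i\<le>op_xpow t. ?F (t, t', i))
      = (\<Sum>t\<in>{t. Q t \<noteq> 0}. \<Sum>b\<in>{t. Kb t \<noteq> 0} \<times> {..op_xpow t}. ?F (t, b))"
    by (simp add: sum.cartesian_product)
  also have "\<dots> = (\<Sum>a\<in>sep_index Q Kb. ?F a)"
    unfolding sep_index_def using assms by (subst sum.Sigma) (auto simp: finite_supp_def)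
  finally show ?thesis .
qed

lemma poly_sum_coeff_le:
  fixes p :: "complex poly"
  assumes "degree p \<le> N"
  shows "poly p z = (\<Sum>m\<le>N. coeff p m * z ^ m)"
  unfolding poly_altdef using assms
  by (intro sum.mono_neutral_left) (auto simp: coeff_eq_0)

lemma bQ_Kbar_exp_minus_poly_form:
  assumes "finite_supp Q" "finite_supp Kb" "q \<noteq> 0" "polyexp \<pi>"
  obtains c D N where "c \<noteq> 0" "\<And>m. polyexp (D m)"
    "\<And>x z. poly c z \<noteq> 0 \<Longrightarrow>
       poly c z * (bQ_Kbar_exp Q Kb q x z - \<pi> x * exp (x * z)) = exp (x * z) * (\<Sum>m\<le>N. z ^ m * D m x)"
proof -
  let ?I = "sep_index Q Kb"
  have finI: "finite ?I" by (rule finite_sep_index[OF assms(1,2)])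
  have "\<exists>c P. c \<noteq> 0 \<and> (\<forall>a\<in>?I. \<forall>z. poly c z \<noteq> 0 \<longrightarrow> sep_z Q q a z = poly (P a) z / poly c z)"
    by (rule rational_fun_common_denominator[OF finI rational_fun_sep_z[OF assms(3)]])
  then obtain c P where cP: "c \<noteq> 0" "\<forall>a\<in>?I. \<forall>z. poly c z \<noteq> 0 \<longrightarrow> sep_z Q q a z = poly (P a) z / poly c z"
    by blast
  define N where "N = Max (insert (degree c) (degree ` P ` ?I))"
  have N: "degree c \<le> N" "\<And>a. a \<in> ?I \<Longrightarrow> degree (P a) \<le> N"
    unfolding N_def using finI by auto
  define D where "D m x = (\<Sum>a\<in>?I. sep_x Kb a x * coeff (P a) m) - \<pi> x * coeff c m" for m x
  have "polyexp (D m)" for m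
    unfolding D_def[abs_def] by (intro polyexp_intros polyexp_sep_x finI assms(4))
  moreover have "poly c z * (bQ_Kbar_exp Q Kb q x z - \<pi> x * exp (x * z)) = exp (x * z) * (\<Sum>m\<le>N. z ^ m * D m x)"
    if cz: "poly c z \<noteq> 0" for x z
  proof -
    have "poly c z * (\<Sum>a\<in>?I. sep_x Kb a x * sep_z Q q a z) = (\<Sum>a\<in>?I. sep_x Kb a x * poly (P a) z)"
      unfolding sum_distrib_left using cP(2) cz by (intro sum.cong refl) simp
    also have "\<dots> = (\<Sum>a\<in>?I. \<Sum>m\<le>N. z ^ m * (sep_x Kb a x * coeff (P a) m))"
      by (intro sum.cong refl)
         (simp add: poly_sum_coeff_le[OF N(2)] sum_distrib_left sum_distrib_right mult_ac)
    also have "\<dots> = (\<Sum>m\<le>N. z ^ m * (\<Sum>a\<in>?I. sep_x Kb a x * coeff (P a) m))"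
      by (subst sum.swap) (simp add: sum_distrib_left)
    finally have A: "poly c z * (\<Sum>a\<in>?I. sep_x Kb a x * sep_z Q q a z)
        = (\<Sum>m\<le>N. z ^ m * (\<Sum>a\<in>?I. sep_x Kb a x * coeff (P a) m))" .
    have B: "poly c z * \<pi> x = (\<Sum>m\<le>N. z ^ m * (\<pi> x * coeff c m))"
      using N(1) by (simp add: poly_sum_coeff_le sum_distrib_left sum_distrib_right mult_ac)
    have "poly c z * (bQ_Kbar_exp Q Kb q x z - \<pi> x * exp (x * z))
        = exp (x * z) * (poly c z * (\<Sum>a\<in>?I. sep_x Kb a x * sep_z Q q a z) - poly c z * \<pi> x)"
      unfolding bQ_Kbar_exp_separated[OF assms(1,2)] by (simp add: algebra_simps)
    also have "\<dots> = exp (x * z) * (\<Sum>m\<le>N. z ^ m * D m x)"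
      unfolding A B D_def by (simp add: right_diff_distrib sum_subtractf)
    finally show ?thesis .
  qed
  ultimately show ?thesis using cP(1) that by blast
qed

section \<open>The identity \<open>\<Lambda>[\<psi>\<^sub>C] = \<pi> \<psi>\<^sub>C\<close>\<close>

lemma entire_eq_0_if_eq_0_on_open:
  assumes "f holomorphic_on UNIV" "open U" "a \<in> U" "\<And>y. y \<in> U \<Longrightarrow> f y = 0"
  shows "f x = 0"
  using analytic_continuation_open[of U UNIV f "\<lambda>_. 0" x] assms by auto

lemma entire_mult_eq_0:
  assumes "f holomorphic_on UNIV" "g holomorphic_on UNIV" "\<And>x. f x * g x = 0" "f a \<noteq> 0"
  shows "g x = 0"
proof (rule entire_eq_0_if_eq_0_on_open[OF assms(2)])
  show "open {x. f x \<noteq> 0}"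
    by (rule open_Collect_neq[OF holomorphic_on_imp_continuous_on[OF assms(1)] continuous_on_const])
qed (use assms(3,4) in auto)

lemma diffop_eq_cmult_diff:
  assumes "f holomorphic_on S" "g holomorphic_on S" "h holomorphic_on S" "open S" "x \<in> S"
    and "\<And>y. y \<in> S \<Longrightarrow> h y = c * (f y - g y)"
  shows "diffop d a h x = c * (diffop d a f x - diffop d a g x)"
proof -
  have hj: "(deriv ^^ j) h x = c * ((deriv ^^ j) f x - (deriv ^^ j) g x)" for j
  proof -
    have "(deriv ^^ j) h x = (deriv ^^ j) (\<lambda>y. c * (f y - g y)) x"
      using assms by (intro higher_deriv_transform_within_open) (auto intro!: holomorphic_intros)
    also have "\<dots> = c * ((deriv ^^ j) f x - (deriv ^^ j) g x)"
      using assms by (simp add: higher_deriv_cmult[where A = S] higher_deriv_diff holomorphic_intros)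
    finally show ?thesis .
  qed
  show ?thesis
    unfolding diffop_def hj by (simp add: sum_distrib_left sum_subtractf right_diff_distrib mult_ac)
qed

lemma diffop_exp_mult:
  assumes "\<phi> holomorphic_on S" "open S" "x \<in> S"
  shows "diffop d a (\<lambda>y. exp (y * z) * \<phi> y) x = exp (x * z) *
    (\<Sum>j\<le>d. a j x * (\<Sum>s = 0..j. of_nat (j choose s) * z ^ s * (deriv ^^ (j - s)) \<phi> x))"
proof -
  have "(deriv ^^ j) (\<lambda>y. exp (y * z) * \<phi> y) x
      = exp (x * z) * (\<Sum>s = 0..j. of_nat (j choose s) * z ^ s * (deriv ^^ (j - s)) \<phi> x)" for j
    using higher_deriv_mult[of "\<lambda>y. exp (y * z)" S \<phi> x j] assms
    by (simp add: higher_deriv_exp_linear' holomorphic_intros sum_distrib_left mult_ac)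
  then show ?thesis
    unfolding diffop_def by (simp add: sum_distrib_left mult_ac)
qed

text \<open>\<open>L[e\<^sup>y\<^sup>z \<Sum>\<^sub>m\<^sub>\<le>\<^sub>M z\<^sup>m f\<^sub>m(y)](x)\<close> is \<open>e\<^sup>x\<^sup>z\<close> times a polynomial in \<open>z\<close> with top coefficient
  \<open>a\<^sub>d(x) f\<^sub>M(x)\<close>.\<close>

lemma diffop_exp_poly_top_coeff:
  assumes "finite B" "open S" "x \<in> S" "\<And>m. f m holomorphic_on S"
    and "\<And>z. z \<notin> B \<Longrightarrow> diffop d a (\<lambda>y. exp (y * z) * (\<Sum>m\<le>M. z ^ m * f m y)) x = 0"
  shows "a d x * f M x = 0"
proof -
  let ?D = "\<lambda>r m. (deriv ^^ r) (f m) x"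
  let ?C = "\<lambda>j s m. a j x * of_nat (j choose s) * ?D (j - s) m"
  define P where "P = (\<Sum>j\<le>d. \<Sum>s\<in>{0..j}. \<Sum>m\<le>M. monom (?C j s m) (s + m))"
  have "poly P z = 0" if "z \<notin> B" for z
  proof -
    have hd: "(deriv ^^ r) (\<lambda>y. \<Sum>m\<le>M. z ^ m * f m y) x = (\<Sum>m\<le>M. z ^ m * ?D r m)" for r
      by (rule higher_deriv_sum_cmult[OF _ assms(4) assms(2,3)]) simp
    have "diffop d a (\<lambda>y. exp (y * z) * (\<Sum>m\<le>M. z ^ m * f m y)) x = exp (x * z) * poly P z"
      unfolding diffop_exp_mult[OF holomorphic_on_sum[OF holomorphic_on_mult[OF holomorphic_on_const assms(4)]] assms(2,3)]
        hd P_def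
      by (simp add: poly_sum poly_monom sum_distrib_left power_add mult_ac)
    then show ?thesis
      using assms(5)[OF that] by simp
  qed
  then have "P = 0"
    by (rule poly_eq_0_cofinite[OF assms(1)])
  moreover have "coeff P (d + M) = ?C d d M"
  proof -
    have "s + m = d + M \<longleftrightarrow> j = d \<and> s = d \<and> m = M" if "j \<le> d" "s \<le> j" "m \<le> M" for j s m
      using that by auto
    then have "coeff P (d + M) = (\<Sum>j\<le>d. \<Sum>s\<in>{0..j}. \<Sum>m\<le>M.
        if m = M then if s = d then if j = d then ?C j s m else 0 else 0 else 0)"
      unfolding P_def coeff_sum coeff_monom by (intro sum.cong refl) auto
    also have "\<dots> = ?C d d M"
      by (simp add: sum.delta' cong: if_cong)
    finally show ?thesis .
  qed
  ultimately show ?thesis by simp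
qed

lemma peop_top_coeff:
  assumes "finite_supp L" "peop_apply L f0 x0 \<noteq> 0"
  obtains d where "peop_coeff L d \<noteq> (\<lambda>x. 0)" "\<And>f x. peop_apply L f x = diffop d (peop_coeff L) f x"
proof -
  obtain m where m: "order_le m (peop_coeff L)" "\<And>f x. peop_apply L f x = diffop m (peop_coeff L) f x"
    using order_le_peop_coeff[OF assms(1)] by blast
  let ?J = "{j. j \<le> m \<and> peop_coeff L j \<noteq> (\<lambda>x. 0)}"
  have fin: "finite ?J" by simp
  have ne: "?J \<noteq> {}"
  proof
    assume "?J = {}"
    then have "diffop m (peop_coeff L) f0 x0 = 0"
      unfolding diffop_def by (auto intro!: sum.neutral)
    then show False using assms(2) m(2) by simp
  qed
  define d where "d = Max ?J"
  have d: "d \<in> ?J"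
    unfolding d_def using Max_in[OF fin ne] .
  have "order_le d (peop_coeff L)"
    unfolding order_le_def
  proof (intro allI impI)
    fix j assume "d < j"
    then have "j \<notin> ?J"
      using Max_ge[OF fin] unfolding d_def by fastforce
    then show "peop_coeff L j = (\<lambda>x. 0)"
      using m(1) by (cases "j \<le> m") (auto simp: order_le_def)
  qed
  then have eq: "diffop m (peop_coeff L) f x = diffop d (peop_coeff L) f x" for f x
    using d by (intro diffop_order_le) auto
  show ?thesis
  proof (rule that)
    show "peop_coeff L d \<noteq> (\<lambda>x. 0)" using d by simp
    show "peop_apply L f x = diffop d (peop_coeff L) f x" for f x
      using m(2) eq by simp
  qed
qed

lemma factorization_peop_nonzero:
  assumes "factorization n cs Q pp"
  shows "\<exists>f x. peop_apply Q f x \<noteq> 0"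
proof -
  let ?q = "qC (dspan n cs)"
  obtain x0 where x0: "pe_fun pp x0 \<noteq> 0"
    using assms unfolding factorization_def by fastforce
  obtain w where w: "poly ?q w \<noteq> 0"
    using poly_eq_0_cofinite[of "{}" ?q] qC_nonzero by blast
  let ?e = "\<lambda>y. exp (y * w)"
  have "poly_diff ?q ?e x0 = poly ?q w * exp (x0 * w)"
    unfolding poly_diff_def higher_deriv_exp_linear' poly_altdef sum_distrib_right by (simp add: mult_ac)
  moreover have "?e holomorphic_on UNIV"
    by (auto intro!: holomorphic_intros)
  then have "poly_diff ?q ?e x0 = peop_apply Q (\<lambda>y. KbarC n cs ?e y / pe_fun pp y) x0"
    using assms x0 unfolding factorization_def by blast
  ultimately show ?thesis
    using w by (intro exI[of _ "\<lambda>y. KbarC n cs ?e y / pe_fun pp y"] exI[of _ x0]) simp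
qed

lemma factorization_bQ_Kbar_exp:
  assumes fact: "factorization n cs Q pp" and rep: "represents_Kbar n cs Kb"
    and z: "regular_point Q (qC (dspan n cs)) z" and x: "pe_fun pp x \<noteq> 0"
  shows "peop_apply Q (\<lambda>y. bQ_Kbar_exp Q Kb (qC (dspan n cs)) y z / pe_fun pp y) x
    = peop_apply Q (\<lambda>y. exp (y * z)) x"
proof -
  let ?q = "qC (dspan n cs)"
  have fs: "finite_supp Q" "finite_supp Kb"
    using fact rep unfolding factorization_def represents_Kbar_def by auto
  have "poly_diff ?q (bQ_exp Q ?q z) x = peop_apply Q (\<lambda>y. KbarC n cs (bQ_exp Q ?q z) y / pe_fun pp y) x"
    using fact holomorphic_bQ_exp x unfolding factorization_def by blast
  moreover have "KbarC n cs (bQ_exp Q ?q z) y = bQ_Kbar_exp Q Kb ?q y z" for y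
    using rep holomorphic_bQ_exp peop_apply_bQ_exp[OF fs z] unfolding represents_Kbar_def by simp
  ultimately show ?thesis
    using poly_diff_bQ_exp[OF fs(1) z] by simp
qed

text \<open>By the factorization, \<open>Q\<close> annihilates \<open>e\<^sup>x\<^sup>z \<Sum>\<^sub>m\<^sub>\<le>\<^sub>M z\<^sup>m D\<^sub>m / \<pi>\<close> for almost all \<open>z\<close>, so the
  product vanishes where \<open>\<pi> \<noteq> 0\<close>, hence everywhere.\<close>

lemma factorization_top_coeff_mult_eq_0:
  assumes fact: "factorization n cs Q pp" and rep: "represents_Kbar n cs Kb"
    and d: "\<And>f x. peop_apply Q f x = diffop d (peop_coeff Q) f x"
    and c: "c \<noteq> 0" and D: "\<And>m. polyexp (D m)"
    and cD: "\<And>x z. poly c z \<noteq> 0 \<Longrightarrow> poly c z * (bQ_Kbar_exp Q Kb (qC (dspan n cs)) x z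
      - pe_fun pp x * exp (x * z)) = exp (x * z) * (\<Sum>m\<le>M. z ^ m * D m x)"
  shows "peop_coeff Q d x * D M x = 0"
proof -
  let ?q = "qC (dspan n cs)" and ?\<pi> = "pe_fun pp"
  let ?S = "{y. ?\<pi> y \<noteq> 0}"
  have fs: "finite_supp Q" "finite_supp pp"
    using fact unfolding factorization_def by auto
  have \<pi>h: "?\<pi> holomorphic_on UNIV"
    by (rule polyexp_holomorphic[OF polyexp_pe_fun[OF fs(2)]])
  have S: "open ?S"
    by (rule open_Collect_neq[OF holomorphic_on_imp_continuous_on[OF \<pi>h] continuous_on_const])
  define B where "B = {z. \<not> regular_point Q ?q z} \<union> {z. poly c z = 0}"
  have finB: "finite B"
    unfolding B_def using finite_irregular_points[OF fs(1) qC_nonzero] poly_roots_finite[OF c] by simp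
  have fh: "(\<lambda>y. D m y / ?\<pi> y) holomorphic_on ?S" for m
    by (intro holomorphic_intros polyexp_holomorphic[OF D] holomorphic_on_subset[OF \<pi>h]) auto
  have top: "peop_coeff Q d y * D M y = 0" if y: "y \<in> ?S" for y
  proof -
    have "diffop d (peop_coeff Q) (\<lambda>y. exp (y * z) * (\<Sum>m\<le>M. z ^ m * (D m y / ?\<pi> y))) y = 0"
      if z: "z \<notin> B" for z
    proof -
      have cz: "poly c z \<noteq> 0" and reg: "regular_point Q ?q z"
        using z unfolding B_def by auto
      have "exp (u * z) * (\<Sum>m\<le>M. z ^ m * (D m u / ?\<pi> u))
          = poly c z * (bQ_Kbar_exp Q Kb ?q u z / ?\<pi> u - exp (u * z))" if "u \<in> ?S" for u
        using cD[OF cz, of u] that by (simp add: field_simps sum_divide_distrib sum_distrib_left)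
      then have "diffop d (peop_coeff Q) (\<lambda>y. exp (y * z) * (\<Sum>m\<le>M. z ^ m * (D m y / ?\<pi> y))) y
          = poly c z * (diffop d (peop_coeff Q) (\<lambda>y. bQ_Kbar_exp Q Kb ?q y z / ?\<pi> y) y
              - diffop d (peop_coeff Q) (\<lambda>y. exp (y * z)) y)"
        using fh y by (intro diffop_eq_cmult_diff[OF _ _ _ S])
          (auto intro!: holomorphic_intros holomorphic_on_subset[OF holomorphic_bQ_Kbar_exp]
            holomorphic_on_subset[OF \<pi>h] polyexp_holomorphic[OF D])
      also have "\<dots> = 0"
        using factorization_bQ_Kbar_exp[OF fact rep reg] y d by simp
      finally show ?thesis .
    qed
    then have "peop_coeff Q d y * (D M y / ?\<pi> y) = 0"
      by (rule diffop_exp_poly_top_coeff[OF finB S y fh])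
    then show ?thesis using y by simp
  qed
  obtain x1 where x1: "?\<pi> x1 \<noteq> 0"
    using fact unfolding factorization_def by (auto simp: fun_eq_iff)
  have "(\<lambda>x. peop_coeff Q d x * D M x) holomorphic_on UNIV"
    by (intro holomorphic_on_mult polyexp_holomorphic[OF D] polyexp_holomorphic[OF polyexp_peop_coeff[OF fs(1)]])
  then show ?thesis
  proof (rule entire_eq_0_if_eq_0_on_open[OF _ S])
    show "x1 \<in> ?S" using x1 by simp
  qed (rule top)
qed

lemma bQ_Kbar_exp_eq:
  assumes fact: "factorization n cs Q pp" and rep: "represents_Kbar n cs Kb"
  obtains B where "finite B" "\<And>z. z \<notin> B \<Longrightarrow> regular_point Q (qC (dspan n cs)) z"
    "\<And>x z. z \<notin> B \<Longrightarrow> bQ_Kbar_exp Q Kb (qC (dspan n cs)) x z = pe_fun pp x * exp (x * z)"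
proof -
  let ?q = "qC (dspan n cs)" and ?\<pi> = "pe_fun pp"
  have fs: "finite_supp Q" "finite_supp Kb" "finite_supp pp"
    using fact rep unfolding factorization_def represents_Kbar_def by auto
  obtain c D N where c: "c \<noteq> 0" and D: "\<And>m. polyexp (D m)"
    and cD: "\<And>x z. poly c z \<noteq> 0 \<Longrightarrow> poly c z * (bQ_Kbar_exp Q Kb ?q x z - ?\<pi> x * exp (x * z))
      = exp (x * z) * (\<Sum>m\<le>N. z ^ m * D m x)"
    using bQ_Kbar_exp_minus_poly_form[OF fs(1,2) qC_nonzero[of "dspan n cs"] polyexp_pe_fun[OF fs(3)]]
    by blast
  obtain f0 x0 where "peop_apply Q f0 x0 \<noteq> 0"
    using factorization_peop_nonzero[OF fact] by blast
  then obtain d where d: "peop_coeff Q d \<noteq> (\<lambda>x. 0)" "\<And>f x. peop_apply Q f x = diffop d (peop_coeff Q) f x"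
    using peop_top_coeff[OF fs(1)] by blast
  have D0: "D m = (\<lambda>x. 0)" if "m \<le> N" for m
  proof (rule ccontr)
    assume "D m \<noteq> (\<lambda>x. 0)"
    define M where "M = Max {m. m \<le> N \<and> D m \<noteq> (\<lambda>x. 0)}"
    have "M \<in> {m. m \<le> N \<and> D m \<noteq> (\<lambda>x. 0)}"
      unfolding M_def by (rule Max_in) (use \<open>m \<le> N\<close> \<open>D m \<noteq> _\<close> in auto)
    then have M: "M \<le> N" "D M \<noteq> (\<lambda>x. 0)"
      by auto
    have above: "D m = (\<lambda>x. 0)" if "M < m" "m \<le> N" for m
      using Max_ge[of "{m. m \<le> N \<and> D m \<noteq> (\<lambda>x. 0)}" m] that unfolding M_def by fastforce
    have sum_M: "(\<Sum>m\<le>N. z ^ m * D m x) = (\<Sum>m\<le>M. z ^ m * D m x)" for z x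
      by (rule sum.mono_neutral_right) (use M(1) above in auto)
    have "peop_coeff Q d x * D M x = 0" for x
    proof (rule factorization_top_coeff_mult_eq_0[OF fact rep d(2) c D])
      show "poly c z * (bQ_Kbar_exp Q Kb ?q y z - ?\<pi> y * exp (y * z)) = exp (y * z) * (\<Sum>m\<le>M. z ^ m * D m y)"
        if "poly c z \<noteq> 0" for y z
        using cD[OF that, of y] sum_M by simp
    qed
    moreover obtain x2 where "peop_coeff Q d x2 \<noteq> 0"
      using d(1) by (auto simp: fun_eq_iff)
    ultimately have "D M x = 0" for x
      by (rule entire_mult_eq_0[OF polyexp_holomorphic[OF polyexp_peop_coeff[OF fs(1)]]
            polyexp_holomorphic[OF D]])
    then show False using M(2) by auto
  qed
  define B where "B = {z. \<not> regular_point Q ?q z} \<union> {z. poly c z = 0}"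
  have "finite B"
    unfolding B_def using finite_irregular_points[OF fs(1) qC_nonzero] poly_roots_finite[OF c] by simp
  then show ?thesis
  proof (rule that)
    show "regular_point Q ?q z" if "z \<notin> B" for z
      using that unfolding B_def by simp
    show "bQ_Kbar_exp Q Kb ?q x z = ?\<pi> x * exp (x * z)" if "z \<notin> B" for x z
    proof -
      have cz: "poly c z \<noteq> 0"
        using that unfolding B_def by simp
      then have "poly c z * (bQ_Kbar_exp Q Kb ?q x z - ?\<pi> x * exp (x * z)) = 0"
        using cD[OF cz, of x] D0 by simp
      then show ?thesis
        using cz by simp
    qed
  qed
qed

lemma b_apply_eventually_cong:
  assumes "\<And>t. L t \<noteq> 0 \<Longrightarrow> eventually (\<lambda>u. F u = G u) (nhds (z + op_exp t))"
  shows "b_apply L F z = b_apply L G z"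
  unfolding b_apply_eq_sum using assms by (intro sum.cong refl) (simp add: higher_deriv_cong_ev)

lemma b_apply_cmult:
  assumes "F holomorphic_on S" "open S" "\<And>t. L t \<noteq> 0 \<Longrightarrow> z + op_exp t \<in> S"
  shows "b_apply L (\<lambda>u. c * F u) z = c * b_apply L F z"
  unfolding b_apply_eq_sum sum_distrib_left
  using assms by (intro sum.cong refl) (simp add: higher_deriv_cmult[where A = S])

lemma b_apply_exp: "b_apply L (\<lambda>w. exp (x * w)) z = peop_symbol L x z * exp (x * z)"
  unfolding b_apply_eq_sum peop_symbol_def higher_deriv_exp_linear
  by (simp add: sum_distrib_left sum_distrib_right exp_add distrib_left mult_ac)

lemma eventually_nhds_avoid_finite:
  fixes w :: "'a::t1_space"
  shows "finite A \<Longrightarrow> w \<notin> A \<Longrightarrow> eventually (\<lambda>u. u \<notin> A) (nhds w)"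
  using eventually_nhds_in_open[OF open_Compl[OF finite_imp_closed], of A w] by simp

text \<open>Away from \<open>u = 0\<close>, \<open>u\<^sup>n/q(u) \<psi>(x, u) = \<tau>(x)\<^sup>-\<^sup>1 K\<^sub>C[e\<^sup>x\<^sup>u]/q(u)\<close>.\<close>

lemma b_apply_psiC:
  assumes rep: "represents_Kbar n cs Kb" and reg: "regular_point Q (qC (dspan n cs)) w"
    and nz: "\<And>t. Q t \<noteq> 0 \<Longrightarrow> w + op_exp t \<noteq> 0"
    and eq: "bQ_Kbar_exp Q Kb (qC (dspan n cs)) x w = p * exp (x * w)"
  shows "b_apply Q (\<lambda>u. u ^ n / poly (qC (dspan n cs)) u * psiC n cs x u) w = p / tauC n cs x * exp (x * w)"
proof -
  let ?q = "qC (dspan n cs)" and ?\<tau> = "tauC n cs x"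
  let ?H = "\<lambda>u. u ^ n / poly ?q u * psiC n cs x u"
  let ?U = "\<lambda>u. peop_symbol Kb x u * exp (x * u) / poly ?q u"
  have H: "?H u = 1 / ?\<tau> * ?U u" if "u \<noteq> 0" for u
    using that unfolding psiC_eq[OF rep]
    by (cases "poly ?q u = 0"; cases "?\<tau> = 0") (auto simp: field_simps)
  have "b_apply Q ?H w = b_apply Q (\<lambda>u. 1 / ?\<tau> * ?U u) w"
  proof (rule b_apply_eventually_cong)
    fix t assume "Q t \<noteq> 0"
    then have "eventually (\<lambda>u. u \<notin> {0}) (nhds (w + op_exp t))"
      using nz by (intro eventually_nhds_avoid_finite) auto
    then show "eventually (\<lambda>u. ?H u = 1 / ?\<tau> * ?U u) (nhds (w + op_exp t))"
      by (rule eventually_mono) (rule H, simp)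
  qed
  also have "\<dots> = 1 / ?\<tau> * b_apply Q ?U w"
    using regular_point_in_open[OF reg]
    by (intro b_apply_cmult[OF _ open_poly_nonzero]) (auto simp: peop_symbol_def intro!: holomorphic_intros)
  also have "\<dots> = p / ?\<tau> * exp (x * w)"
    using b_apply_Kbar_exp_div[OF _ reg] rep eq unfolding represents_Kbar_def by simp
  finally show ?thesis .
qed

text \<open>By \<open>bQ_Kbar_exp_eq\<close>, \<open>b(Q)[u\<^sup>n/q(u) \<psi>(x, u)] = (\<pi>/\<tau>)(x) e\<^sup>x\<^sup>w\<close> for \<open>w\<close> off a finite set,
  and \<open>b(K\<^sub>C)\<close> maps this to \<open>(\<pi>/\<tau>)(x) K\<^sub>C[e\<^sup>x\<^sup>z] = \<pi>(x) z\<^sup>n \<psi>(x, z)\<close> for \<open>z\<close> off the shifts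
  of that set by the exponents occurring in \<open>K\<^sub>C\<close>.\<close>

lemma Lambda_hat_psiC:
  assumes fact: "factorization n cs Q pp" and rep: "represents_Kbar n cs Kb"
  shows "\<exists>F. finite F \<and> (\<forall>x z. z \<notin> F \<longrightarrow>
    Lambda_hat n cs Kb Q (psiC n cs x) z = pe_fun pp x * psiC n cs x z)"
proof -
  let ?q = "qC (dspan n cs)"
  have fs: "finite_supp Q" "finite_supp Kb"
    using fact rep unfolding factorization_def represents_Kbar_def by auto
  obtain B where B: "finite B" "\<And>z. z \<notin> B \<Longrightarrow> regular_point Q ?q z"
    "\<And>x z. z \<notin> B \<Longrightarrow> bQ_Kbar_exp Q Kb ?q x z = pe_fun pp x * exp (x * z)"
    using bQ_Kbar_exp_eq[OF fact rep] by blast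
  define B0 where "B0 = B \<union> (\<lambda>t. - op_exp t) ` {t. Q t \<noteq> 0}"
  define F where "F = {0} \<union> (\<Union>t\<in>{t. Kb t \<noteq> 0}. (\<lambda>b. b - op_exp t) ` B0)"
  have finB0: "finite B0" and finF: "finite F"
    using B(1) fs unfolding B0_def F_def finite_supp_def by auto
  have bQ: "b_apply Q (\<lambda>u. u ^ n / poly ?q u * psiC n cs x u) w = pe_fun pp x / tauC n cs x * exp (x * w)"
    if w: "w \<notin> B0" for x w
  proof (rule b_apply_psiC[OF rep])
    show "w + op_exp t \<noteq> 0" if "Q t \<noteq> 0" for t
      using w that unfolding B0_def by (auto simp: eq_neg_iff_add_eq_0[symmetric])
  qed (use B(2,3) w in \<open>auto simp: B0_def\<close>)
  have "Lambda_hat n cs Kb Q (psiC n cs x) z = pe_fun pp x * psiC n cs x z" if z: "z \<notin> F" for x z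
  proof -
    let ?c = "pe_fun pp x / tauC n cs x"
    have "b_apply Kb (b_apply Q (\<lambda>u. u ^ n / poly ?q u * psiC n cs x u)) z
        = b_apply Kb (\<lambda>w. ?c * exp (x * w)) z"
    proof (rule b_apply_eventually_cong)
      fix t assume t: "Kb t \<noteq> 0"
      have "z + op_exp t \<notin> B0"
      proof
        assume "z + op_exp t \<in> B0"
        then have "z \<in> (\<lambda>b. b - op_exp t) ` B0"
          by (intro image_eqI[of _ _ "z + op_exp t"]) auto
        then show False
          using z t unfolding F_def by blast
      qed
      then show "eventually (\<lambda>w. b_apply Q (\<lambda>u. u ^ n / poly ?q u * psiC n cs x u) w
          = ?c * exp (x * w)) (nhds (z + op_exp t))"
        by (rule eventually_mono[OF eventually_nhds_avoid_finite[OF finB0]]) (rule bQ)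
    qed
    also have "\<dots> = ?c * (peop_symbol Kb x z * exp (x * z))"
      by (subst b_apply_cmult[where S = UNIV]) (auto intro!: holomorphic_intros simp: b_apply_exp)
    finally show ?thesis
      using z unfolding Lambda_hat_def psiC_eq[OF rep] F_def by simp
  qed
  then show ?thesis using finF by blast
qed

theorem mainTheorem2:
  fixes n :: nat and cs :: "nat \<Rightarrow> distr"
  assumes "n \<ge> 1"
    and "\<forall>i<n. finite_supp (cs i)"
    and "dlin_indep n cs"
  shows "(\<exists>Q pp. factorization n cs Q pp)
    \<and> (\<exists>Kb. represents_Kbar n cs Kb)
    \<and> (\<forall>Q pp Kb. factorization n cs Q pp \<and> represents_Kbar n cs Kb \<longrightarrow>
         (\<exists>F. finite F \<and> (\<forall>x z. z \<notin> F \<longrightarrow>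
            Lambda_hat n cs Kb Q (psiC n cs x) z = pe_fun pp x * psiC n cs x z)))"
  using factorization_exists[OF assms] represents_Kbar_exists[OF assms(2)] Lambda_hat_psiC by blast

end
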